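(* Let $\mathcal{X}$ be a complete separable metric space with its Borel $\sigma$-field. For each $\lambda>0$ let $p_{0,\lambda},p_{1,\lambda}$ be probability measures on $\mathcal{X}$ with $p_{1,\lambda}\ll p_{0,\lambda}$, and let $L^{(\lambda)}=\frac{dp_{1,\lambda}}{dp_{0,\lambda}}$; write $\mathbb{E}_{0,\lambda}$ for expectation under $p_{0,\lambda}$. Assume that as $\lambda\to\infty$, $p_{0,\lambda}\to p_0$ and $p_{1,\lambda}\to p_1$ weakly, for some probability measures $p_0,p_1$ on $\mathcal{X}$, and that there is a finite constant $c>0$ with $\mathbb{E}_{0,\lambda}[(L^{(\lambda)})^2]\le c$ for all $\lambda>0$. Then $p_1\ll p_0$. If moreover $L:=\frac{dp_1}{dp_0}$ satisfies $\mathbb{E}_{0,\lambda}[(L^{(\lambda)})^2]\to\mathbb{E}_{p_0}[L^2]$ as $\lambda\to\infty$, then: (i) the law of $L^{(\lambda)}$ under $p_{0,\lambda}$ converges weakly as $\lambda\to\infty$ to the law of $L$ under $p_0$; (ii) $\mathrm{KL}(p_{1,\lambda}\Vert p_{0,\lambda})\to\mathrm{KL}(p_1\Vert p_0)$ as $\lambda\to\infty$.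
   Context: $\mathrm{KL}(P\Vert Q)=\mathbb{E}_P[\log\frac{dP}{dQ}]$ denotes the Kullback–Leibler divergence. *)

theory Defs
  imports "HOL-Probability.Probability"
begin

definition weak_conv_filter :: "('i \<Rightarrow> 'a::topological_space measure) \<Rightarrow> 'a measure \<Rightarrow> 'i filter \<Rightarrow> bool" where
  "weak_conv_filter M N F \<longleftrightarrow>
     (\<forall>f :: 'a \<Rightarrow> real. continuous_on UNIV f \<and> bounded (range f) \<longrightarrow>
        ((\<lambda>i. \<integral>x. f x \<partial>M i) \<longlongrightarrow> (\<integral>x. f x \<partial>N)) F)"

text \<open>KL(P || Q) with natural logarithm: E_P[ln dP/dQ].\<close>
definition KL :: "'a measure \<Rightarrow> 'a measure \<Rightarrow> real" where
  "KL P Q = KL_divergence (exp 1) Q P"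

end

theory Submission
  imports Defs "HOL-Real_Asymp.Real_Asymp"
begin

(*
  For a continuous g with 0 <= g <= 1 the
  pointwise AM-GM bound L g <= t g + L^2/(4t) integrates to
  E_{1,lambda} g <= t E_{0,lambda} g + c/(4t); this inequality survives the weak limit and, by
  regularity of finite Borel measures on a Polish space, extends from continuous g to indicators,
  so p1 A <= t p0 A + c/(4t) for every Borel set A and every t > 0.  Hence p1 << p0.

  If moreover E_{0,lambda} L_lambda^2 -> E_0 L^2, then expanding the square shows
  E_{0,lambda} (L_lambda - g)^2 -> E_0 (L - g)^2 for every bounded continuous g.  As bounded
  continuous functions are dense in L^2(p0), this gives E_{0,lambda} h(L_lambda) -> E_0 h(L) for
  every bounded Lipschitz h, in particular for the piecewise linear approximations of indicators
  of half-lines, and these determine weak convergence on the real line.  Finally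
  KL(p_{1,lambda} || p_{0,lambda}) = E_{0,lambda} [L_lambda ln L_lambda]; truncating y ln y at
  level S^2 changes this by at most 2c/S uniformly in lambda (second moments are bounded by c),
  and the truncated expectations converge by the weak convergence just proved.
*)

section \<open>Bounded continuous functions and regularity\<close>

lemma borel_measurable_if_sets_eq_borel:
  assumes "sets M = sets borel" "f \<in> borel_measurable borel"
  shows "f \<in> borel_measurable M"
  using assms(2) unfolding measurable_cong_sets[OF assms(1) refl] .

lemma bcontfun_borel_measurable:
  fixes g :: "'a::topological_space \<Rightarrow> 'b::metric_space"
  assumes "g \<in> bcontfun" "sets M = sets borel"
  shows "g \<in> borel_measurable M"
  using assms(1) by (intro borel_measurable_if_sets_eq_borel[OF assms(2)])
    (simp add: bcontfun_def borel_measurable_continuous_onI)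

lemma bcontfun_integrable:
  fixes g :: "'a::topological_space \<Rightarrow> real"
  assumes "g \<in> bcontfun" "sets M = sets borel" "finite_measure M"
  shows "integrable M g"
proof -
  obtain B where "\<And>x. \<bar>g x\<bar> \<le> B"
    using assms(1) by (auto simp: bcontfun_def bounded_real)
  then show ?thesis
    using bcontfun_borel_measurable[OF assms(1,2)]
    by (intro finite_measure.integrable_const_bound[OF assms(3), where B=B]) auto
qed

lemma bcontfun_compose:
  fixes g :: "'a::topological_space \<Rightarrow> 'b::heine_borel" and h :: "'b \<Rightarrow> 'c::metric_space"
  assumes "g \<in> bcontfun" "continuous_on UNIV h"
  shows "(\<lambda>x. h (g x)) \<in> bcontfun"
proof -
  have "compact (closure (range g))"
    using assms(1) unfolding bcontfun_def by (simp add: compact_closure)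
  then have "bounded (h ` closure (range g))"
    by (intro compact_imp_bounded compact_continuous_image continuous_on_subset[OF assms(2)]) simp
  then have "bounded (range (\<lambda>x. h (g x)))"
    by (rule bounded_subset) (use closure_subset in blast)
  moreover have "continuous_on UNIV (\<lambda>x. h (g x))"
    using assms(1) unfolding bcontfun_def by (intro continuous_on_compose2[OF assms(2)]) auto
  ultimately show ?thesis
    unfolding bcontfun_def by simp
qed

lemma bcontfun_power2:
  fixes g :: "'a::topological_space \<Rightarrow> real"
  shows "g \<in> bcontfun \<Longrightarrow> (\<lambda>x. (g x)\<^sup>2) \<in> bcontfun"
  using bcontfun_compose[of g power2] by (simp add: continuous_on_power continuous_on_id)

lemma weak_conv_filterD:
  fixes f :: "'a::topological_space \<Rightarrow> real"
  assumes "weak_conv_filter M N F" "f \<in> bcontfun"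
  shows "((\<lambda>i. \<integral>x. f x \<partial>M i) \<longlongrightarrow> (\<integral>x. f x \<partial>N)) F"
  using assms unfolding weak_conv_filter_def bcontfun_def by blast

lemma Urysohn_closed_open:
  fixes K U :: "'a::metric_space set"
  assumes "closed K" "open U" "K \<subseteq> U"
  obtains g :: "'a \<Rightarrow> real" where "g \<in> bcontfun" "\<And>x. g x \<in> {0..1}"
    "\<And>x. x \<in> K \<Longrightarrow> g x = 1" "\<And>x. x \<notin> U \<Longrightarrow> g x = 0"
proof -
  have "normal_space (euclidean :: 'a topology)"
    by (simp add: metrizable_imp_normal_space metrizable_space_euclidean)
  moreover have "closedin euclidean (- U)" "closedin euclidean K" "disjnt (- U) K"
    using assms by (auto simp: disjnt_def)
  ultimately obtain g :: "'a \<Rightarrow> real" where g: "continuous_map euclidean (top_of_set {0..1}) g"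
    "g ` (- U) \<subseteq> {0}" "g ` K \<subseteq> {1}"
    unfolding normal_space_iff_Urysohn by meson
  then have "continuous_on UNIV g" "\<And>x. g x \<in> {0..1}"
    unfolding continuous_map_in_subtopology by auto
  then have "g \<in> bcontfun"
    by (intro bcontfun_normI[where b=1]) auto
  with g(2,3) \<open>\<And>x. g x \<in> {0..1}\<close> show ?thesis
    by (intro that[of g]) auto
qed

lemma (in finite_measure) integrable_indicator_real:
  "A \<in> sets M \<Longrightarrow> integrable M (indicator A :: 'a \<Rightarrow> real)"
  by (intro integrable_real_indicator) (simp_all add: less_top[symmetric])

lemma (in finite_measure) integral_le_measure_if_le_indicator:
  assumes "A \<in> sets M" "integrable M g" "\<And>x. g x \<le> indicator A x"
  shows "(\<integral>x. g x \<partial>M) \<le> measure M A"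
proof -
  have "(\<integral>x. g x \<partial>M) \<le> (\<integral>x. indicator A x \<partial>M)"
    using assms by (intro integral_mono integrable_indicator_real)
  then show ?thesis
    using assms(1) by simp
qed

lemma finite_measure_outer_regular:
  fixes M :: "'a::polish_space measure" and e :: real
  assumes "finite_measure M" "sets M = sets borel" "A \<in> sets borel" "e > 0"
  obtains U where "open U" "A \<subseteq> U" "measure M (U - A) < e"
proof -
  interpret finite_measure M by fact
  have "emeasure M A < ennreal (measure M A + e)"
    using assms(4) by (simp add: emeasure_eq_measure ennreal_less_iff)
  moreover have "emeasure M A = (INF U \<in> {U. A \<subseteq> U \<and> open U}. emeasure M U)"
    by (rule outer_regular[OF assms(2) _ assms(3)]) simp
  ultimately obtain U where U: "A \<subseteq> U" "open U" "emeasure M U < ennreal (measure M A + e)"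
    by (auto simp: INF_less_iff)
  have "U \<in> sets M" "A \<in> sets M"
    using U(2) assms(2,3) by auto
  with U show ?thesis
    by (intro that[of U]) (auto simp: emeasure_eq_measure ennreal_less_iff finite_measure_Diff)
qed

text \<open>Closed inner approximation comes from outer approximation of the complement.\<close>

lemma finite_measure_closed_open_approx:
  fixes M :: "'a::polish_space measure" and e :: real
  assumes "finite_measure M" "sets M = sets borel" "A \<in> sets borel" "e > 0"
  obtains K U where "closed K" "open U" "K \<subseteq> A" "A \<subseteq> U" "measure M (U - K) < e"
proof -
  interpret finite_measure M by fact
  have "e / 2 > 0"
    using assms(4) by simp
  obtain U where U: "open U" "A \<subseteq> U" "measure M (U - A) < e / 2"
    using finite_measure_outer_regular[OF assms(1-3) \<open>e / 2 > 0\<close>] by blast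
  have "- A \<in> sets borel"
    using assms(3) by (rule borel_comp)
  then obtain V where V: "open V" "- A \<subseteq> V" "measure M (V - - A) < e / 2"
    using finite_measure_outer_regular[OF assms(1,2) _ \<open>e / 2 > 0\<close>] by blast
  have sets: "U - A \<in> sets M" "V - - A \<in> sets M"
    using U(1) V(1) assms(2,3) by auto
  have "measure M (U - - V) \<le> measure M ((U - A) \<union> (V - - A))"
    using sets by (intro finite_measure_mono) auto
  also have "\<dots> \<le> measure M (U - A) + measure M (V - - A)"
    using sets by (intro measure_subadditive) (auto simp: emeasure_finite)
  finally show ?thesis
    using U V by (intro that[of "- V" U]) auto
qed

lemma (in finite_measure) integral_abs_indicator_diff_le:
  assumes "A \<in> sets M" "K \<in> sets M" "U \<in> sets M" "K \<subseteq> A" "A \<subseteq> U" "integrable M g"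
    and "\<And>x. g x \<in> {0..1}" "\<And>x. x \<in> K \<Longrightarrow> g x = 1" "\<And>x. x \<notin> U \<Longrightarrow> g x = 0"
  shows "(\<integral>x. \<bar>indicator A x - g x\<bar> \<partial>M) \<le> measure M (U - K)"
proof (rule integral_le_measure_if_le_indicator)
  show "integrable M (\<lambda>x. \<bar>indicator A x - g x\<bar>)"
    using integrable_indicator_real[OF assms(1)] assms(6) by auto
  show "\<bar>indicator A x - g x\<bar> \<le> (indicator (U - K) x :: real)" for x
  proof (cases "x \<in> U - K")
    case True
    then show ?thesis
      using assms(7)[of x] by (simp add: indicator_def)
  next
    case False
    then have "indicator A x = g x"
      using assms(4,5) assms(8,9)[of x] by (auto simp: indicator_def)
    with False show ?thesis
      by simp
  qed
qed (use assms(2,3) in auto)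

lemma bcontfun_L1_approx_indicator:
  fixes M N :: "'a::polish_space measure" and e :: real
  assumes M: "finite_measure M" "sets M = sets borel" and N: "finite_measure N" "sets N = sets borel"
    and "A \<in> sets borel" "e > 0"
  obtains g :: "'a \<Rightarrow> real" where "g \<in> bcontfun" "\<And>x. g x \<in> {0..1}"
    "(\<integral>x. \<bar>indicator A x - g x\<bar> \<partial>M) < e" "(\<integral>x. \<bar>indicator A x - g x\<bar> \<partial>N) < e"
proof -
  obtain K1 U1 where K1: "closed K1" "open U1" "K1 \<subseteq> A" "A \<subseteq> U1" "measure M (U1 - K1) < e"
    using finite_measure_closed_open_approx[OF M \<open>A \<in> sets borel\<close> \<open>e > 0\<close>] by blast
  obtain K2 U2 where K2: "closed K2" "open U2" "K2 \<subseteq> A" "A \<subseteq> U2" "measure N (U2 - K2) < e"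
    using finite_measure_closed_open_approx[OF N \<open>A \<in> sets borel\<close> \<open>e > 0\<close>] by blast
  have "closed (K1 \<union> K2)" "open (U1 \<inter> U2)" "K1 \<union> K2 \<subseteq> U1 \<inter> U2"
    using K1 K2 by auto
  then obtain g :: "'a \<Rightarrow> real" where g: "g \<in> bcontfun" "\<And>x. g x \<in> {0..1}"
    "\<And>x. x \<in> K1 \<union> K2 \<Longrightarrow> g x = 1" "\<And>x. x \<notin> U1 \<inter> U2 \<Longrightarrow> g x = 0"
    using Urysohn_closed_open by blast
  have error: "(\<integral>x. \<bar>indicator A x - g x\<bar> \<partial>P) < e"
    if P: "finite_measure P" "sets P = sets borel" and "closed K" "open U" "K \<subseteq> K1 \<union> K2"
      "U1 \<inter> U2 \<subseteq> U" "measure P (U - K) < e" for P :: "'a measure" and K U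
  proof -
    interpret finite_measure P by fact
    have sets: "A \<in> sets P" "K1 \<union> K2 \<in> sets P" "U1 \<inter> U2 \<in> sets P" "U - K \<in> sets P"
      using P(2) \<open>A \<in> sets borel\<close> K1 K2 that(3,4) by auto
    have "(\<integral>x. \<bar>indicator A x - g x\<bar> \<partial>P) \<le> measure P ((U1 \<inter> U2) - (K1 \<union> K2))"
      using K1 K2 g bcontfun_integrable[OF g(1) P(2,1)]
      by (intro integral_abs_indicator_diff_le sets) auto
    also have "\<dots> \<le> measure P (U - K)"
      using sets that(5,6) by (intro finite_measure_mono) auto
    finally show ?thesis
      using that(7) by linarith
  qed
  show ?thesis
    using error[OF M K1(1,2)] error[OF N K2(1,2)] K1(5) K2(5) by (intro that[OF g(1,2)]) auto
qed

lemma measure_le_if_integral_bcontfun_le: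
  fixes M N :: "'a::polish_space measure" and t C :: real
  assumes M: "finite_measure M" "sets M = sets borel" and N: "finite_measure N" "sets N = sets borel"
    and le: "\<And>g. g \<in> bcontfun \<Longrightarrow> (\<And>x. g x \<in> {0..1}) \<Longrightarrow> (\<integral>x. g x \<partial>N) \<le> t * (\<integral>x. g x \<partial>M) + C"
    and "t \<ge> 0" "A \<in> sets borel"
  shows "measure N A \<le> t * measure M A + C"
proof (rule field_le_epsilon)
  fix e :: real
  assume "e > 0"
  define e' where "e' = e / (t + 1)"
  have "e' > 0"
    using \<open>e > 0\<close> \<open>t \<ge> 0\<close> by (simp add: e'_def)
  then obtain g :: "'a \<Rightarrow> real" where g: "g \<in> bcontfun" "\<And>x. g x \<in> {0..1}"
    "(\<integral>x. \<bar>indicator A x - g x\<bar> \<partial>M) < e'" "(\<integral>x. \<bar>indicator A x - g x\<bar> \<partial>N) < e'"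
    using bcontfun_L1_approx_indicator[OF M N \<open>A \<in> sets borel\<close>] by blast
  have close: "\<bar>measure P A - (\<integral>x. g x \<partial>P)\<bar> \<le> (\<integral>x. \<bar>indicator A x - g x\<bar> \<partial>P)"
    if "finite_measure P" "sets P = sets borel" for P :: "'a measure"
  proof -
    interpret finite_measure P by fact
    have "A \<in> sets P"
      using that(2) \<open>A \<in> sets borel\<close> by simp
    then have int: "integrable P (indicator A :: 'a \<Rightarrow> real)" "integrable P g"
      using integrable_indicator_real bcontfun_integrable[OF g(1) that(2,1)] by auto
    then have "measure P A - (\<integral>x. g x \<partial>P) = (\<integral>x. indicator A x - g x \<partial>P)"
      using that(2) \<open>A \<in> sets borel\<close> by simp
    then show ?thesis
      by (metis integral_abs_bound)
  qed
  have "t * (\<integral>x. g x \<partial>M) \<le> t * (measure M A + e')"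
    using close[OF M] g(3) \<open>t \<ge> 0\<close> by (intro mult_left_mono) auto
  then have "measure N A \<le> t * (measure M A + e') + C + e'"
    using close[OF N] g(4) le[OF g(1,2)] by linarith
  also have "\<dots> = t * measure M A + C + e"
  proof -
    have "t * e' + e' = e"
      using \<open>t \<ge> 0\<close> by (simp add: e'_def add_divide_distrib[symmetric] divide_eq_eq algebra_simps)
    then show ?thesis
      unfolding distrib_left by linarith
  qed
  finally show "measure N A \<le> t * measure M A + C + e" .
qed

section \<open>Density of bounded continuous functions in \<open>L\<^sup>1\<close> and \<open>L\<^sup>2\<close>\<close>

lemma integral_abs_diff_triangle:
  fixes f g h :: "'a \<Rightarrow> real"
  assumes "integrable M f" "integrable M g" "integrable M h"
  shows "(\<integral>x. \<bar>f x - h x\<bar> \<partial>M) \<le> (\<integral>x. \<bar>f x - g x\<bar> \<partial>M) + (\<integral>x. \<bar>g x - h x\<bar> \<partial>M)"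
proof -
  have "(\<integral>x. \<bar>f x - h x\<bar> \<partial>M) \<le> (\<integral>x. \<bar>f x - g x\<bar> + \<bar>g x - h x\<bar> \<partial>M)"
    using assms by (intro integral_mono) auto
  also have "\<dots> = (\<integral>x. \<bar>f x - g x\<bar> \<partial>M) + (\<integral>x. \<bar>g x - h x\<bar> \<partial>M)"
    using assms by (intro Bochner_Integration.integral_add) auto
  finally show ?thesis .
qed

lemma tendsto_integral_abs_diff_dominated:
  fixes f :: "'a \<Rightarrow> real"
  assumes "integrable M f" "\<And>i. s i \<in> borel_measurable M" "integrable M w"
    and "\<And>x. x \<in> space M \<Longrightarrow> (\<lambda>i. s i x) \<longlonglongrightarrow> f x"
    and "\<And>i x. x \<in> space M \<Longrightarrow> \<bar>s i x\<bar> \<le> w x"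
  shows "(\<lambda>i. \<integral>x. \<bar>f x - s i x\<bar> \<partial>M) \<longlonglongrightarrow> 0"
proof -
  have "(\<lambda>i. \<integral>x. \<bar>f x - s i x\<bar> \<partial>M) \<longlonglongrightarrow> (\<integral>x. 0 \<partial>M)"
  proof (rule integral_dominated_convergence[where w="\<lambda>x. \<bar>f x\<bar> + w x"])
    show "AE x in M. (\<lambda>i. \<bar>f x - s i x\<bar>) \<longlonglongrightarrow> 0"
    proof (rule AE_I2)
      fix x assume "x \<in> space M"
      then have "(\<lambda>i. \<bar>f x - s i x\<bar>) \<longlonglongrightarrow> \<bar>f x - f x\<bar>"
        by (intro tendsto_intros assms(4))
      then show "(\<lambda>i. \<bar>f x - s i x\<bar>) \<longlonglongrightarrow> 0"
        by simp
    qed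
    show "AE x in M. norm \<bar>f x - s i x\<bar> \<le> \<bar>f x\<bar> + w x" for i
    proof (rule AE_I2)
      fix x assume "x \<in> space M"
      then show "norm \<bar>f x - s i x\<bar> \<le> \<bar>f x\<bar> + w x"
        using assms(5)[of x i] abs_triangle_ineq4[of "f x" "s i x"] by simp
    qed
    show "(\<lambda>x. \<bar>f x - s i x\<bar>) \<in> borel_measurable M" for i
      using borel_measurable_integrable[OF assms(1)] assms(2) by measurable
    show "integrable M (\<lambda>x. \<bar>f x\<bar> + w x)"
      using assms(1,3) by (intro Bochner_Integration.integrable_add integrable_abs)
  qed simp
  then show ?thesis
    by simp
qed

definition bcontfun_L1_approximable :: "'a::topological_space measure \<Rightarrow> ('a \<Rightarrow> real) \<Rightarrow> bool" where
  "bcontfun_L1_approximable M f \<longleftrightarrow> (\<forall>e>0. \<exists>g\<in>bcontfun. (\<integral>x. \<bar>f x - g x\<bar> \<partial>M) < e)"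

lemma bcontfun_L1_approximable_indicator:
  fixes M :: "'a::polish_space measure"
  assumes "finite_measure M" "sets M = sets borel" "A \<in> sets M"
  shows "bcontfun_L1_approximable M (indicator A)"
  unfolding bcontfun_L1_approximable_def
proof (intro allI impI)
  fix e :: real
  assume "e > 0"
  moreover have "A \<in> sets borel"
    using assms(2,3) by simp
  ultimately obtain g :: "'a \<Rightarrow> real" where "g \<in> bcontfun" "(\<integral>x. \<bar>indicator A x - g x\<bar> \<partial>M) < e"
    using bcontfun_L1_approx_indicator[OF assms(1,2) assms(1,2)] by blast
  then show "\<exists>g\<in>bcontfun. (\<integral>x. \<bar>indicator A x - g x\<bar> \<partial>M) < e"
    by blast
qed

lemma bcontfun_L1_approximable_mult:
  assumes "bcontfun_L1_approximable M f"
  shows "bcontfun_L1_approximable M (\<lambda>x. c * f x)"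
  unfolding bcontfun_L1_approximable_def
proof (intro allI impI)
  fix e :: real
  assume "e > 0"
  then have "e / (\<bar>c\<bar> + 1) > 0"
    by simp
  then obtain g where g: "g \<in> bcontfun" "(\<integral>x. \<bar>f x - g x\<bar> \<partial>M) < e / (\<bar>c\<bar> + 1)"
    using assms unfolding bcontfun_L1_approximable_def by blast
  have "\<bar>c * f x - c * g x\<bar> = \<bar>c\<bar> * \<bar>f x - g x\<bar>" for x
    by (simp flip: abs_mult right_diff_distrib)
  then have "(\<integral>x. \<bar>c * f x - c * g x\<bar> \<partial>M) = \<bar>c\<bar> * (\<integral>x. \<bar>f x - g x\<bar> \<partial>M)"
    by simp
  also have "\<dots> \<le> \<bar>c\<bar> * (e / (\<bar>c\<bar> + 1))"
    using g(2) by (intro mult_left_mono) auto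
  also have "\<dots> < e"
    using \<open>e > 0\<close> by (simp add: field_simps)
  finally have "(\<integral>x. \<bar>c * f x - c * g x\<bar> \<partial>M) < e" .
  moreover have "(\<lambda>x. c * g x) \<in> bcontfun"
    using scaleR_cont[OF g(1), of c] by simp
  ultimately show "\<exists>g\<in>bcontfun. (\<integral>x. \<bar>c * f x - g x\<bar> \<partial>M) < e"
    by (rule bexI)
qed

lemma bcontfun_L1_approximable_add:
  fixes u v :: "'a::topological_space \<Rightarrow> real"
  assumes M: "finite_measure M" "sets M = sets borel" and "integrable M u" "integrable M v"
    and "bcontfun_L1_approximable M u" "bcontfun_L1_approximable M v"
  shows "bcontfun_L1_approximable M (\<lambda>x. u x + v x)"
  unfolding bcontfun_L1_approximable_def
proof (intro allI impI)
  fix e :: real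
  assume "e > 0"
  then obtain gu gv where gu: "gu \<in> bcontfun" "(\<integral>x. \<bar>u x - gu x\<bar> \<partial>M) < e / 2"
    and gv: "gv \<in> bcontfun" "(\<integral>x. \<bar>v x - gv x\<bar> \<partial>M) < e / 2"
    using assms(5,6) unfolding bcontfun_L1_approximable_def by (meson half_gt_zero)
  have int: "integrable M gu" "integrable M gv"
    using bcontfun_integrable[OF gu(1) M(2,1)] bcontfun_integrable[OF gv(1) M(2,1)] .
  have "(\<integral>x. \<bar>(u x + v x) - (gu x + gv x)\<bar> \<partial>M) \<le> (\<integral>x. \<bar>u x - gu x\<bar> + \<bar>v x - gv x\<bar> \<partial>M)"
    using int assms(3,4) by (intro integral_mono) auto
  also have "\<dots> = (\<integral>x. \<bar>u x - gu x\<bar> \<partial>M) + (\<integral>x. \<bar>v x - gv x\<bar> \<partial>M)"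
    using int assms(3,4) by (intro Bochner_Integration.integral_add) auto
  also have "\<dots> < e"
    using gu(2) gv(2) by simp
  finally show "\<exists>g\<in>bcontfun. (\<integral>x. \<bar>(u x + v x) - g x\<bar> \<partial>M) < e"
    using plus_cont[OF gu(1) gv(1)] by (rule bexI)
qed

lemma bcontfun_L1_approximable_limit:
  fixes f :: "'a::topological_space \<Rightarrow> real"
  assumes M: "finite_measure M" "sets M = sets borel" and "integrable M f" "\<And>i. integrable M (s i)"
    and "\<And>i. bcontfun_L1_approximable M (s i)"
    and "(\<lambda>i. \<integral>x. \<bar>f x - s i x\<bar> \<partial>M) \<longlonglongrightarrow> 0"
  shows "bcontfun_L1_approximable M f"
  unfolding bcontfun_L1_approximable_def
proof (intro allI impI)
  fix e :: real
  assume "e > 0"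
  then have "\<forall>\<^sub>F i in sequentially. (\<integral>x. \<bar>f x - s i x\<bar> \<partial>M) < e / 2"
    using assms(6) by (intro order_tendstoD(2)) auto
  then obtain i where i: "(\<integral>x. \<bar>f x - s i x\<bar> \<partial>M) < e / 2"
    unfolding eventually_sequentially by blast
  obtain g where g: "g \<in> bcontfun" "(\<integral>x. \<bar>s i x - g x\<bar> \<partial>M) < e / 2"
    using assms(5)[of i] \<open>e > 0\<close> unfolding bcontfun_L1_approximable_def by (meson half_gt_zero)
  have "(\<integral>x. \<bar>f x - g x\<bar> \<partial>M) \<le> (\<integral>x. \<bar>f x - s i x\<bar> \<partial>M) + (\<integral>x. \<bar>s i x - g x\<bar> \<partial>M)"
    using assms(3,4) bcontfun_integrable[OF g(1) M(2,1)] by (intro integral_abs_diff_triangle)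
  also have "\<dots> < e"
    using i g(2) by simp
  finally show "\<exists>g\<in>bcontfun. (\<integral>x. \<bar>f x - g x\<bar> \<partial>M) < e"
    using g(1) by blast
qed

lemma bcontfun_dense_L1:
  fixes M :: "'a::polish_space measure" and f :: "'a \<Rightarrow> real"
  assumes M: "finite_measure M" "sets M = sets borel" and "integrable M f"
  shows "bcontfun_L1_approximable M f"
  using assms(3)
proof (induction rule: integrable_induct)
  case (base A c)
  then show ?case
    using bcontfun_L1_approximable_mult[OF bcontfun_L1_approximable_indicator[OF M base(1)], of c]
    by (simp add: mult.commute)
next
  case (add u v)
  then show ?case
    by (rule bcontfun_L1_approximable_add[OF M])
next
  case (lim f s)
  have "(\<lambda>i. \<integral>x. \<bar>f x - s i x\<bar> \<partial>M) \<longlonglongrightarrow> 0"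
  proof (rule tendsto_integral_abs_diff_dominated[where w="\<lambda>x. 2 * \<bar>f x\<bar>"])
    show "\<bar>s i x\<bar> \<le> 2 * \<bar>f x\<bar>" if "x \<in> space M" for i x
      using lim.hyps(3)[OF that] by simp
  qed (use lim.hyps in auto)
  then show ?case
    by (rule bcontfun_L1_approximable_limit[OF M lim.hyps(4,1) lim.IH])
qed

lemma power2_sum_le: "(a + b)\<^sup>2 \<le> 2 * a\<^sup>2 + 2 * (b::real)\<^sup>2"
proof -
  have "0 \<le> (a - b)\<^sup>2"
    by simp
  then show ?thesis
    by (simp add: power2_sum power2_diff)
qed

lemma integrable_square_diff:
  fixes f g :: "'a \<Rightarrow> real"
  assumes "f \<in> borel_measurable M" "g \<in> borel_measurable M"
    and "integrable M (\<lambda>x. (f x)\<^sup>2)" "integrable M (\<lambda>x. (g x)\<^sup>2)"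
  shows "integrable M (\<lambda>x. (f x - g x)\<^sup>2)"
proof (rule Bochner_Integration.integrable_bound)
  show "integrable M (\<lambda>x. 2 * (f x)\<^sup>2 + 2 * (g x)\<^sup>2)"
    using assms(3,4) by simp
  show "AE x in M. norm ((f x - g x)\<^sup>2) \<le> norm (2 * (f x)\<^sup>2 + 2 * (g x)\<^sup>2)"
  proof (rule AE_I2)
    fix x
    show "norm ((f x - g x)\<^sup>2) \<le> norm (2 * (f x)\<^sup>2 + 2 * (g x)\<^sup>2)"
      using power2_sum_le[of "f x" "- g x"] by simp
  qed
qed (use assms(1,2) in measurable)

lemma integrable_square_diff_bcontfun:
  fixes f g :: "'a::topological_space \<Rightarrow> real"
  assumes "finite_measure M" "sets M = sets borel" "f \<in> borel_measurable M"
    "integrable M (\<lambda>x. (f x)\<^sup>2)" "g \<in> bcontfun"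
  shows "integrable M (\<lambda>x. (f x - g x)\<^sup>2)"
  using bcontfun_borel_measurable[OF assms(5,2)] bcontfun_integrable[OF bcontfun_power2[OF assms(5)] assms(2,1)]
  by (intro integrable_square_diff assms(3,4))

lemma integrable_square_if_bounded:
  fixes g :: "'a \<Rightarrow> real"
  assumes "finite_measure M" "g \<in> borel_measurable M" "\<And>x. \<bar>g x\<bar> \<le> B"
  shows "integrable M (\<lambda>x. (g x)\<^sup>2)"
proof (rule finite_measure.integrable_const_bound[OF assms(1), where B="B\<^sup>2"])
  show "AE x in M. norm ((g x)\<^sup>2) \<le> B\<^sup>2"
  proof (rule AE_I2)
    fix x
    have "\<bar>g x\<bar> \<le> \<bar>B\<bar>"
      using assms(3)[of x] by arith
    then show "norm ((g x)\<^sup>2) \<le> B\<^sup>2"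
      by (simp add: abs_le_square_iff)
  qed
qed (use assms(2) in measurable)

lemma continuous_on_clamp: "continuous_on S (clamp a (b::real))"
  using clamp_continuous_on[where f="\<lambda>x. x" and a=a and b=b and S=S] by (simp add: continuous_on_id')

lemma clamp_real: "a \<le> b \<Longrightarrow> clamp a b (x::real) = max a (min b x)"
  unfolding clamp_def Basis_real_def by auto

text \<open>Clamping \<open>z\<close> to \<open>[-B, B]\<close> only brings it closer to a point \<open>y\<close> of that interval.\<close>

lemma power2_diff_clamp_le:
  fixes y z B :: real
  assumes "\<bar>y\<bar> \<le> B"
  shows "(y - clamp (- B) B z)\<^sup>2 \<le> 2 * B * \<bar>y - z\<bar>"
proof -
  have "0 \<le> B"
    using assms by linarith
  then have "\<bar>y - clamp (- B) B z\<bar> \<le> \<bar>y - z\<bar>" "\<bar>y - clamp (- B) B z\<bar> \<le> 2 * B"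
    using assms by (auto simp: clamp_real abs_le_iff)
  then have "\<bar>y - clamp (- B) B z\<bar> * \<bar>y - clamp (- B) B z\<bar> \<le> 2 * B * \<bar>y - z\<bar>"
    by (metis abs_ge_zero mult.commute mult_mono)
  then show ?thesis
    by (simp add: power2_eq_square abs_mult_self_eq)
qed

lemma tendsto_integral_square_diff_clamp:
  fixes f :: "'a \<Rightarrow> real"
  assumes "f \<in> borel_measurable M" "integrable M (\<lambda>x. (f x)\<^sup>2)"
  shows "(\<lambda>N. \<integral>x. (f x - clamp (- real N) (real N) (f x))\<^sup>2 \<partial>M) \<longlonglongrightarrow> 0"
proof -
  have clamp_meas: "clamp a b \<in> borel_measurable borel" for a b :: real
    by (rule borel_measurable_continuous_onI[OF continuous_on_clamp])
  have "(\<lambda>N. \<integral>x. (f x - clamp (- real N) (real N) (f x))\<^sup>2 \<partial>M) \<longlonglongrightarrow> (\<integral>x. 0 \<partial>M)"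
  proof (rule integral_dominated_convergence[where w="\<lambda>x. (f x)\<^sup>2"])
    show "(\<lambda>x. (f x - clamp (- real N) (real N) (f x))\<^sup>2) \<in> borel_measurable M" for N
      using assms(1) clamp_meas by measurable
    show "AE x in M. (\<lambda>N. (f x - clamp (- real N) (real N) (f x))\<^sup>2) \<longlonglongrightarrow> 0"
    proof (rule AE_I2)
      fix x
      obtain N0 :: nat where "\<bar>f x\<bar> \<le> real N0"
        using real_arch_simple by blast
      then have "\<forall>\<^sub>F N in sequentially. (f x - clamp (- real N) (real N) (f x))\<^sup>2 = 0"
        unfolding eventually_sequentially by (intro exI[of _ N0]) (auto simp: clamp_real)
      then show "(\<lambda>N. (f x - clamp (- real N) (real N) (f x))\<^sup>2) \<longlonglongrightarrow> 0"
        by (rule tendsto_eventually)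
    qed
    show "AE x in M. norm ((f x - clamp (- real N) (real N) (f x))\<^sup>2) \<le> (f x)\<^sup>2" for N
      by (intro AE_I2) (auto simp: clamp_real abs_le_square_iff[symmetric])
  qed (use assms in auto)
  then show ?thesis
    by simp
qed

lemma bcontfun_L2_approx_bounded:
  fixes M :: "'a::polish_space measure" and f :: "'a \<Rightarrow> real"
  assumes M: "finite_measure M" "sets M = sets borel"
    and f: "f \<in> borel_measurable M" "\<And>x. \<bar>f x\<bar> \<le> B" and "e > 0"
  shows "\<exists>g\<in>bcontfun. (\<integral>x. (f x - g x)\<^sup>2 \<partial>M) < e"
proof -
  have "0 \<le> B"
    using f(2) by (meson abs_ge_zero order_trans)
  have "integrable M f"
    using f by (intro finite_measure.integrable_const_bound[OF M(1), where B=B]) auto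
  moreover have "e / (2 * B + 1) > 0"
    using \<open>e > 0\<close> \<open>0 \<le> B\<close> by simp
  ultimately obtain g where g: "g \<in> bcontfun" "(\<integral>x. \<bar>f x - g x\<bar> \<partial>M) < e / (2 * B + 1)"
    using bcontfun_dense_L1[OF M] unfolding bcontfun_L1_approximable_def by blast
  define g' where "g' x = clamp (- B) B (g x)" for x
  have g': "g' \<in> bcontfun"
    unfolding g'_def by (rule bcontfun_compose[OF g(1) continuous_on_clamp])
  have "\<bar>f x - g' x\<bar> \<le> 2 * B" for x
    using f(2)[of x] \<open>0 \<le> B\<close> by (auto simp: g'_def clamp_real abs_le_iff)
  then have "integrable M (\<lambda>x. (f x - g' x)\<^sup>2)"
    using f(1) bcontfun_borel_measurable[OF g' M(2)] by (intro integrable_square_if_bounded[OF M(1)]) auto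
  then have "(\<integral>x. (f x - g' x)\<^sup>2 \<partial>M) \<le> (\<integral>x. 2 * B * \<bar>f x - g x\<bar> \<partial>M)"
    using power2_diff_clamp_le[OF f(2)] \<open>integrable M f\<close> bcontfun_integrable[OF g(1) M(2,1)]
    by (intro integral_mono) (auto simp: g'_def)
  also have "\<dots> = 2 * B * (\<integral>x. \<bar>f x - g x\<bar> \<partial>M)"
    by simp
  also have "\<dots> \<le> 2 * B * (e / (2 * B + 1))"
    using g(2) \<open>0 \<le> B\<close> by (intro mult_left_mono) auto
  also have "\<dots> < e"
    using \<open>e > 0\<close> \<open>0 \<le> B\<close> by (simp add: field_simps)
  finally show ?thesis
    using g' by blast
qed

lemma bcontfun_dense_L2:
  fixes M :: "'a::polish_space measure" and f :: "'a \<Rightarrow> real"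
  assumes M: "finite_measure M" "sets M = sets borel"
    and f: "f \<in> borel_measurable M" "integrable M (\<lambda>x. (f x)\<^sup>2)" and "e > 0"
  shows "\<exists>g\<in>bcontfun. (\<integral>x. (f x - g x)\<^sup>2 \<partial>M) < e"
proof -
  obtain N :: nat where N: "(\<integral>x. (f x - clamp (- real N) (real N) (f x))\<^sup>2 \<partial>M) < e / 4"
    using order_tendstoD(2)[OF tendsto_integral_square_diff_clamp[OF f], of "e / 4"] \<open>e > 0\<close>
    by (auto simp: eventually_sequentially)
  define fN where "fN x = clamp (- real N) (real N) (f x)" for x
  have fN_meas: "fN \<in> borel_measurable M"
    unfolding fN_def[abs_def]
    by (rule measurable_compose[OF f(1) borel_measurable_continuous_onI[OF continuous_on_clamp]])
  have fN_bound: "\<bar>fN x\<bar> \<le> real N" for x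
    by (auto simp: fN_def clamp_real)
  have "e / 4 > 0"
    using \<open>e > 0\<close> by simp
  then obtain g where g: "g \<in> bcontfun" "(\<integral>x. (fN x - g x)\<^sup>2 \<partial>M) < e / 4"
    using bcontfun_L2_approx_bounded[OF M fN_meas fN_bound] by blast
  have g_meas: "g \<in> borel_measurable M"
    by (rule bcontfun_borel_measurable[OF g(1) M(2)])
  have g2: "integrable M (\<lambda>x. (g x)\<^sup>2)"
    using bcontfun_integrable[OF bcontfun_power2[OF g(1)] M(2,1)] .
  have fN2: "integrable M (\<lambda>x. (fN x)\<^sup>2)"
    by (rule integrable_square_if_bounded[OF M(1) fN_meas fN_bound])
  have int: "integrable M (\<lambda>x. (f x - fN x)\<^sup>2)" "integrable M (\<lambda>x. (fN x - g x)\<^sup>2)"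
    "integrable M (\<lambda>x. (f x - g x)\<^sup>2)"
    by (rule integrable_square_diff[OF f(1) fN_meas f(2) fN2],
        rule integrable_square_diff[OF fN_meas g_meas fN2 g2],
        rule integrable_square_diff[OF f(1) g_meas f(2) g2])
  have "(\<integral>x. (f x - g x)\<^sup>2 \<partial>M) \<le> (\<integral>x. 2 * (f x - fN x)\<^sup>2 + 2 * (fN x - g x)\<^sup>2 \<partial>M)"
  proof (rule integral_mono)
    show "(f x - g x)\<^sup>2 \<le> 2 * (f x - fN x)\<^sup>2 + 2 * (fN x - g x)\<^sup>2" for x
      using power2_sum_le[of "f x - fN x" "fN x - g x"] by simp
  qed (use int in auto)
  also have "\<dots> = 2 * (\<integral>x. (f x - fN x)\<^sup>2 \<partial>M) + 2 * (\<integral>x. (fN x - g x)\<^sup>2 \<partial>M)"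
    using int by simp
  also have "\<dots> < e"
    using N g(2) by (simp add: fN_def)
  finally show ?thesis
    using g(1) by blast
qed

section \<open>Lipschitz test functions and weak convergence of laws\<close>

lemma abs_le_add_square_div:
  fixes x d :: real
  assumes "d > 0"
  shows "\<bar>x\<bar> \<le> d + x\<^sup>2 / d"
proof (cases "\<bar>x\<bar> \<le> d")
  case True
  then show ?thesis
    by (simp add: add_increasing2)
next
  case False
  then have "\<bar>x\<bar> * d \<le> \<bar>x\<bar> * \<bar>x\<bar>"
    using assms by (intro mult_left_mono) auto
  then have "\<bar>x\<bar> \<le> x\<^sup>2 / d"
    using assms by (simp add: field_simps power2_eq_square flip: abs_mult)
  then show ?thesis
    using assms by simp
qed

lemma integral_lipschitz_comp_diff_le:
  fixes f g :: "'a \<Rightarrow> real" and h :: "real \<Rightarrow> real"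
  assumes "prob_space M" "f \<in> borel_measurable M" "g \<in> borel_measurable M"
    and "integrable M (\<lambda>x. (f x - g x)\<^sup>2)"
    and h: "K-lipschitz_on UNIV h" "bounded (range h)" and "d > 0"
  shows "\<bar>(\<integral>x. h (f x) \<partial>M) - (\<integral>x. h (g x) \<partial>M)\<bar> \<le> K * d + K * (\<integral>x. (f x - g x)\<^sup>2 \<partial>M) / d"
proof -
  interpret prob_space M by fact
  have h_meas: "h \<in> borel_measurable borel"
    using lipschitz_on_continuous_on[OF h(1)] by (rule borel_measurable_continuous_onI)
  obtain B where "\<And>y. \<bar>h y\<bar> \<le> B"
    using h(2) by (auto simp: bounded_real)
  then have int: "integrable M (\<lambda>x. h (f x))" "integrable M (\<lambda>x. h (g x))"
    using assms(2,3) h_meas by (auto intro!: integrable_const_bound[where B=B])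
  have pointwise: "\<bar>h (f x) - h (g x)\<bar> \<le> K * d + K * (f x - g x)\<^sup>2 / d" for x
  proof -
    have "\<bar>h (f x) - h (g x)\<bar> \<le> K * \<bar>f x - g x\<bar>"
      using lipschitz_onD[OF h(1)] by (simp add: dist_real_def)
    also have "\<dots> \<le> K * (d + (f x - g x)\<^sup>2 / d)"
      using lipschitz_on_nonneg[OF h(1)] abs_le_add_square_div[OF \<open>d > 0\<close>]
      by (intro mult_left_mono) auto
    finally show ?thesis
      by (simp add: algebra_simps)
  qed
  have "\<bar>(\<integral>x. h (f x) \<partial>M) - (\<integral>x. h (g x) \<partial>M)\<bar> = \<bar>\<integral>x. h (f x) - h (g x) \<partial>M\<bar>"
    using int by simp
  also have "\<dots> \<le> (\<integral>x. \<bar>h (f x) - h (g x)\<bar> \<partial>M)"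
    by (rule integral_abs_bound)
  also have "\<dots> \<le> (\<integral>x. K * d + K * (f x - g x)\<^sup>2 / d \<partial>M)"
    using int assms(4) pointwise by (intro integral_mono) auto
  also have "\<dots> = K * d + K * (\<integral>x. (f x - g x)\<^sup>2 \<partial>M) / d"
    using assms(4) by (simp add: prob_space)
  finally show ?thesis .
qed

lemma integral_lipschitz_comp_modulus:
  fixes h :: "real \<Rightarrow> real" and e :: real
  assumes h: "K-lipschitz_on UNIV h" "bounded (range h)" and "e > 0"
  obtains \<eta> where "\<eta> > 0"
    "\<And>(M :: 'a measure) f g. prob_space M \<Longrightarrow> f \<in> borel_measurable M \<Longrightarrow> g \<in> borel_measurable M \<Longrightarrow>
      integrable M (\<lambda>x. (f x - g x)\<^sup>2) \<Longrightarrow> (\<integral>x. (f x - g x)\<^sup>2 \<partial>M) \<le> \<eta> \<Longrightarrow>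
      \<bar>(\<integral>x. h (f x) \<partial>M) - (\<integral>x. h (g x) \<partial>M)\<bar> \<le> e"
proof -
  define K' where "K' = K + 1"
  have "K' > 0" "K'-lipschitz_on UNIV h"
    using lipschitz_on_nonneg[OF h(1)] lipschitz_on_le[OF h(1)] by (auto simp: K'_def)
  define d where "d = e / (2 * K')"
  define \<eta> where "\<eta> = d * e / (2 * K')"
  have "d > 0" "\<eta> > 0" "K' * d = e / 2" "K' * \<eta> / d = e / 2"
    using \<open>e > 0\<close> \<open>K' > 0\<close> by (auto simp: d_def \<eta>_def)
  show ?thesis
  proof (rule that[OF \<open>\<eta> > 0\<close>])
    fix M :: "'a measure" and f g
    assume M: "prob_space M" "f \<in> borel_measurable M" "g \<in> borel_measurable M"
      "integrable M (\<lambda>x. (f x - g x)\<^sup>2)" and "(\<integral>x. (f x - g x)\<^sup>2 \<partial>M) \<le> \<eta>"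
    then have "K' * (\<integral>x. (f x - g x)\<^sup>2 \<partial>M) / d \<le> K' * \<eta> / d"
      using \<open>K' > 0\<close> \<open>d > 0\<close> by (simp add: divide_right_mono)
    moreover have "\<bar>(\<integral>x. h (f x) \<partial>M) - (\<integral>x. h (g x) \<partial>M)\<bar>
        \<le> K' * d + K' * (\<integral>x. (f x - g x)\<^sup>2 \<partial>M) / d"
      by (rule integral_lipschitz_comp_diff_le[OF M \<open>K'-lipschitz_on UNIV h\<close> h(2) \<open>d > 0\<close>])
    ultimately show "\<bar>(\<integral>x. h (f x) \<partial>M) - (\<integral>x. h (g x) \<partial>M)\<bar> \<le> e"
      using \<open>K' * d = e / 2\<close> \<open>K' * \<eta> / d = e / 2\<close> by linarith
  qed
qed

lemma tendsto_by_approximation: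
  fixes x :: "'i \<Rightarrow> real"
  assumes "\<And>e. e > 0 \<Longrightarrow> \<exists>a a0. (a \<longlongrightarrow> a0) F \<and> (\<forall>\<^sub>F i in F. \<bar>x i - a i\<bar> \<le> e) \<and> \<bar>x0 - a0\<bar> \<le> e"
  shows "(x \<longlongrightarrow> x0) F"
proof (rule tendstoI)
  fix e :: real
  assume "e > 0"
  then obtain a a0 where a: "(a \<longlongrightarrow> a0) F" "\<forall>\<^sub>F i in F. \<bar>x i - a i\<bar> \<le> e / 4" "\<bar>x0 - a0\<bar> \<le> e / 4"
    using assms[of "e / 4"] by auto
  have "\<forall>\<^sub>F i in F. dist (a i) a0 < e / 4"
    using \<open>e > 0\<close> by (intro tendstoD[OF a(1)]) simp
  with a(2) show "\<forall>\<^sub>F i in F. dist (x i) x0 < e"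
    unfolding dist_real_def by eventually_elim (use a(3) in arith)
qed

lemma tendsto_integral_lipschitz_comp:
  fixes Ms :: "'i \<Rightarrow> 'a::polish_space measure" and fs :: "'i \<Rightarrow> 'a \<Rightarrow> real"
    and M :: "'a measure" and f :: "'a \<Rightarrow> real" and h :: "real \<Rightarrow> real"
  assumes Ms: "\<forall>\<^sub>F i in F. prob_space (Ms i) \<and> sets (Ms i) = sets borel \<and>
      fs i \<in> borel_measurable borel \<and> integrable (Ms i) (\<lambda>x. (fs i x)\<^sup>2)"
    and M: "prob_space M" "sets M = sets borel" "f \<in> borel_measurable borel"
      "integrable M (\<lambda>x. (f x)\<^sup>2)"
    and weak: "weak_conv_filter Ms M F"
    and L2: "\<And>g. g \<in> bcontfun \<Longrightarrow>
      ((\<lambda>i. \<integral>x. (fs i x - g x)\<^sup>2 \<partial>Ms i) \<longlongrightarrow> (\<integral>x. (f x - g x)\<^sup>2 \<partial>M)) F"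
    and h: "K-lipschitz_on UNIV h" "bounded (range h)"
  shows "((\<lambda>i. \<integral>x. h (fs i x) \<partial>Ms i) \<longlongrightarrow> (\<integral>x. h (f x) \<partial>M)) F"
proof (rule tendsto_by_approximation)
  fix e :: real
  assume "e > 0"
  obtain \<eta> where "\<eta> > 0" and modulus:
    "\<And>(N :: 'a measure) u v. prob_space N \<Longrightarrow> u \<in> borel_measurable N \<Longrightarrow> v \<in> borel_measurable N \<Longrightarrow>
      integrable N (\<lambda>x. (u x - v x)\<^sup>2) \<Longrightarrow> (\<integral>x. (u x - v x)\<^sup>2 \<partial>N) \<le> \<eta> \<Longrightarrow>
      \<bar>(\<integral>x. h (u x) \<partial>N) - (\<integral>x. h (v x) \<partial>N)\<bar> \<le> e"
    using integral_lipschitz_comp_modulus[OF h \<open>e > 0\<close>] by blast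
  text \<open>Approximate \<open>f\<close> in \<open>L\<^sup>2(M)\<close> by a bounded continuous \<open>g\<close>: then \<open>h \<circ> g\<close> is a test function for
    the weak convergence, and hypothesis \<open>L2\<close> carries the approximation over to the \<open>Ms i\<close>.\<close>
  have "finite_measure M"
    using M(1) by (simp add: prob_space_def)
  then obtain g where g: "g \<in> bcontfun" "(\<integral>x. (f x - g x)\<^sup>2 \<partial>M) < \<eta>"
    using bcontfun_dense_L2[OF _ M(2) borel_measurable_if_sets_eq_borel[OF M(2,3)] M(4) \<open>\<eta> > 0\<close>]
    by blast
  have approx: "\<bar>(\<integral>x. h (u x) \<partial>N) - (\<integral>x. h (g x) \<partial>N)\<bar> \<le> e"
    if N: "prob_space N" "sets N = sets borel" and u: "u \<in> borel_measurable borel"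
      "integrable N (\<lambda>x. (u x)\<^sup>2)" "(\<integral>x. (u x - g x)\<^sup>2 \<partial>N) \<le> \<eta>" for N u
    using borel_measurable_if_sets_eq_borel[OF N(2) u(1)] N u(2)
    by (intro modulus[OF N(1) _ bcontfun_borel_measurable[OF g(1) N(2)] _ u(3)]
        integrable_square_diff_bcontfun[OF _ N(2) _ _ g(1)]) (auto simp: prob_space_def)
  show "\<exists>a a0. (a \<longlongrightarrow> a0) F \<and> (\<forall>\<^sub>F i in F. \<bar>(\<integral>x. h (fs i x) \<partial>Ms i) - a i\<bar> \<le> e) \<and>
    \<bar>(\<integral>x. h (f x) \<partial>M) - a0\<bar> \<le> e"
  proof (intro exI conjI)
    show "((\<lambda>i. \<integral>x. h (g x) \<partial>Ms i) \<longlongrightarrow> (\<integral>x. h (g x) \<partial>M)) F"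
      using weak_conv_filterD[OF weak bcontfun_compose[OF g(1) lipschitz_on_continuous_on[OF h(1)]]] .
    have "\<forall>\<^sub>F i in F. (\<integral>x. (fs i x - g x)\<^sup>2 \<partial>Ms i) < \<eta>"
      using L2[OF g(1)] g(2) by (rule order_tendstoD(2))
    with Ms show "\<forall>\<^sub>F i in F. \<bar>(\<integral>x. h (fs i x) \<partial>Ms i) - (\<integral>x. h (g x) \<partial>Ms i)\<bar> \<le> e"
      by eventually_elim (rule approx; auto)
    show "\<bar>(\<integral>x. h (f x) \<partial>M) - (\<integral>x. h (g x) \<partial>M)\<bar> \<le> e"
      using approx[OF M] g(2) by simp
  qed
qed

lemma cts_step_eq_clip:
  assumes "a < b"
  shows "cts_step a b u = max 0 (min 1 ((b - u) / (b - a)))"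
proof (cases "u \<le> a")
  case True
  then have "1 \<le> (b - u) / (b - a)"
    using assms by (simp add: le_divide_eq)
  then show ?thesis
    using True by (simp add: cts_step_def)
next
  case False
  show ?thesis
  proof (cases "b \<le> u")
    case True
    then have "(b - u) / (b - a) \<le> 0"
      using assms by (simp add: divide_le_0_iff)
    then show ?thesis
      using True False by (simp add: cts_step_def)
  next
    case False': False
    then have "(b - u) / (b - a) \<le> 1" "0 \<le> (b - u) / (b - a)"
      using assms False by (simp_all add: divide_le_eq)
    then show ?thesis
      using False False' by (simp add: cts_step_def)
  qed
qed

lemma cts_step_lipschitz:
  assumes "a < b"
  shows "(1 / (b - a))-lipschitz_on UNIV (cts_step a b)"
proof (rule lipschitz_onI)
  fix x y :: real
  have clip: "\<bar>max 0 (min 1 p) - max 0 (min 1 q)\<bar> \<le> \<bar>p - q\<bar>" for p q :: real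
    by (simp add: max_def min_def abs_if)
  have "\<bar>cts_step a b x - cts_step a b y\<bar> \<le> \<bar>(b - x) / (b - a) - (b - y) / (b - a)\<bar>"
    unfolding cts_step_eq_clip[OF assms] by (rule clip)
  also have "\<dots> = 1 / (b - a) * \<bar>x - y\<bar>"
    using assms by (simp add: abs_minus_commute flip: diff_divide_distrib)
  finally show "dist (cts_step a b x) (cts_step a b y) \<le> 1 / (b - a) * dist x y"
    by (simp add: dist_real_def)
qed (use assms in simp)

lemma cts_step_bounded: "bounded (range (cts_step a b))"
proof -
  have "\<bar>cts_step a b u\<bar> \<le> 1" for u
  proof (cases "u \<le> a \<or> b \<le> u")
    case False
    then have "a < b"
      by linarith
    then show ?thesis
      by (simp add: cts_step_eq_clip)
  qed (auto simp: cts_step_def)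
  then show ?thesis
    unfolding bounded_real by blast
qed

lemma weak_conv_filter_at_top_if_cts_step:
  fixes \<mu> :: "real \<Rightarrow> real measure" and \<nu> :: "real measure"
  assumes \<mu>: "\<forall>\<^sub>F l in at_top. real_distribution (\<mu> l)" and \<nu>: "real_distribution \<nu>"
    and cts: "\<And>a b. a < b \<Longrightarrow>
      ((\<lambda>l. \<integral>x. cts_step a b x \<partial>\<mu> l) \<longlongrightarrow> (\<integral>x. cts_step a b x \<partial>\<nu>)) at_top"
  shows "weak_conv_filter \<mu> \<nu> at_top"
  unfolding weak_conv_filter_def
proof (intro allI impI tendsto_at_topI_sequentially)
  fix f :: "real \<Rightarrow> real" and X :: "nat \<Rightarrow> real"
  assume f: "continuous_on UNIV f \<and> bounded (range f)" and X: "filterlim X at_top sequentially"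
  text \<open>Outside the eventual range of \<open>\<mu>\<close> replace it by \<open>\<nu>\<close>, so that every term is a distribution.\<close>
  define \<mu>' where "\<mu>' n = (if real_distribution (\<mu> (X n)) then \<mu> (X n) else \<nu>)" for n
  have \<mu>': "real_distribution (\<mu>' n)" for n
    using \<nu> by (simp add: \<mu>'_def)
  have eq: "\<forall>\<^sub>F n in sequentially. \<mu>' n = \<mu> (X n)"
    using eventually_compose_filterlim[OF \<mu> X] by eventually_elim (simp add: \<mu>'_def)
  have "weak_conv_m \<mu>' \<nu>"
  proof (rule integral_cts_step_conv_imp_weak_conv[OF \<mu>' \<nu>])
    fix a b :: real
    assume "a < b"
    have "(\<lambda>n. \<integral>x. cts_step a b x \<partial>\<mu> (X n)) \<longlonglongrightarrow> (\<integral>x. cts_step a b x \<partial>\<nu>)"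
      using filterlim_compose[OF cts[OF \<open>a < b\<close>] X] .
    moreover have "\<forall>\<^sub>F n in sequentially. (\<integral>x. cts_step a b x \<partial>\<mu> (X n)) = (\<integral>x. cts_step a b x \<partial>\<mu>' n)"
      using eq by eventually_elim simp
    ultimately show "(\<lambda>n. integral\<^sup>L (\<mu>' n) (cts_step a b)) \<longlonglongrightarrow> integral\<^sup>L \<nu> (cts_step a b)"
      by (rule Lim_transform_eventually)
  qed
  moreover obtain B where "\<And>x. \<bar>f x\<bar> \<le> B"
    using f by (auto simp: bounded_real)
  ultimately have "(\<lambda>n. \<integral>x. f x \<partial>\<mu>' n) \<longlonglongrightarrow> (\<integral>x. f x \<partial>\<nu>)"
    using f by (intro weak_conv_imp_integral_bdd_continuous_conv[OF \<mu>' \<nu>])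
      (auto simp: continuous_on_eq_continuous_at)
  moreover have "\<forall>\<^sub>F n in sequentially. (\<integral>x. f x \<partial>\<mu>' n) = (\<integral>x. f x \<partial>\<mu> (X n))"
    using eq by eventually_elim simp
  ultimately show "(\<lambda>n. \<integral>x. f x \<partial>\<mu> (X n)) \<longlonglongrightarrow> (\<integral>x. f x \<partial>\<nu>)"
    by (rule Lim_transform_eventually)
qed

lemma weak_conv_filter_distr_if_L2_conv:
  fixes Ms :: "real \<Rightarrow> 'a::polish_space measure" and fs :: "real \<Rightarrow> 'a \<Rightarrow> real"
    and M :: "'a measure" and f :: "'a \<Rightarrow> real"
  assumes Ms: "\<forall>\<^sub>F l in at_top. prob_space (Ms l) \<and> sets (Ms l) = sets borel \<and>
      fs l \<in> borel_measurable borel \<and> integrable (Ms l) (\<lambda>x. (fs l x)\<^sup>2)"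
    and M: "prob_space M" "sets M = sets borel" "f \<in> borel_measurable borel"
      "integrable M (\<lambda>x. (f x)\<^sup>2)"
    and weak: "weak_conv_filter Ms M at_top"
    and L2: "\<And>g. g \<in> bcontfun \<Longrightarrow>
      ((\<lambda>l. \<integral>x. (fs l x - g x)\<^sup>2 \<partial>Ms l) \<longlongrightarrow> (\<integral>x. (f x - g x)\<^sup>2 \<partial>M)) at_top"
  shows "weak_conv_filter (\<lambda>l. distr (Ms l) borel (fs l)) (distr M borel f) at_top"
proof (rule weak_conv_filter_at_top_if_cts_step)
  have distr_prob: "real_distribution (distr N borel u)"
    if "prob_space N" "sets N = sets borel" "u \<in> borel_measurable borel" for N :: "'a measure" and u
    using prob_space.real_distribution_distr[OF that(1) borel_measurable_if_sets_eq_borel[OF that(2,3)]] .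
  show "\<forall>\<^sub>F l in at_top. real_distribution (distr (Ms l) borel (fs l))"
    using Ms by eventually_elim (intro distr_prob, auto)
  show "real_distribution (distr M borel f)"
    using M by (intro distr_prob)
  fix a b :: real
  assume "a < b"
  have cts_meas: "cts_step a b \<in> borel_measurable borel"
    using lipschitz_on_continuous_on[OF cts_step_lipschitz[OF \<open>a < b\<close>]]
    by (rule borel_measurable_continuous_onI)
  have integral_distr_eq: "(\<integral>x. cts_step a b x \<partial>distr N borel u) = (\<integral>x. cts_step a b (u x) \<partial>N)"
    if "sets N = sets borel" "u \<in> borel_measurable borel" for N :: "'a measure" and u
    using integral_distr[OF borel_measurable_if_sets_eq_borel[OF that] cts_meas] .
  have "((\<lambda>l. \<integral>x. cts_step a b (fs l x) \<partial>Ms l) \<longlongrightarrow> (\<integral>x. cts_step a b (f x) \<partial>M)) at_top"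
    by (rule tendsto_integral_lipschitz_comp[OF Ms M weak L2 cts_step_lipschitz[OF \<open>a < b\<close>]
          cts_step_bounded])
  moreover have "\<forall>\<^sub>F l in at_top.
      (\<integral>x. cts_step a b (fs l x) \<partial>Ms l) = (\<integral>x. cts_step a b x \<partial>distr (Ms l) borel (fs l))"
    using Ms by eventually_elim (simp add: integral_distr_eq)
  ultimately show "((\<lambda>l. \<integral>x. cts_step a b x \<partial>distr (Ms l) borel (fs l))
      \<longlongrightarrow> (\<integral>x. cts_step a b x \<partial>distr M borel f)) at_top"
    unfolding integral_distr_eq[OF M(2,3)] by (rule Lim_transform_eventually)
qed

section \<open>The function \<open>y ln y\<close>\<close>

definition xlnx :: "real \<Rightarrow> real" where
  "xlnx y = y * ln y"

lemma abs_xlnx_le: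
  assumes "0 \<le> y"
  shows "\<bar>xlnx y\<bar> \<le> 1 + y\<^sup>2"
proof (cases "y = 0")
  case False
  with assms have "y > 0"
    by simp
  have "y * ln y \<le> y * y"
    using ln_le_minus_one[OF \<open>y > 0\<close>] \<open>y > 0\<close> by (intro mult_left_mono) auto
  then have upper: "y * ln y \<le> y\<^sup>2"
    by (simp add: power2_eq_square)
  have "- ln y \<le> 1 / y - 1"
    using ln_le_minus_one[of "1 / y"] \<open>y > 0\<close> by (simp add: ln_div)
  then have "y * - ln y \<le> y * (1 / y - 1)"
    using \<open>y > 0\<close> by (intro mult_left_mono) auto
  then have lower: "- (y * ln y) \<le> 1"
    using \<open>y > 0\<close> by (simp add: algebra_simps)
  show ?thesis
    unfolding xlnx_def abs_le_iff
  proof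
    show "y * ln y \<le> 1 + y\<^sup>2"
      using upper by linarith
    show "- (y * ln y) \<le> 1 + y\<^sup>2"
      using lower zero_le_power2[of y] by linarith
  qed
qed (simp add: xlnx_def)

lemma continuous_on_xlnx: "continuous_on {0..} xlnx"
  unfolding continuous_on_eq_continuous_within
proof
  fix y :: real
  assume "y \<in> {0..}"
  show "continuous (at y within {0..}) xlnx"
  proof (cases "y = 0")
    case True
    have "{0::real..} - {0} = {0<..}" "{0::real<..} - {0} = {0<..}"
      by auto
    then have "at (0::real) within {0..} = at_right 0"
      by (simp add: at_within_def)
    moreover have "(xlnx \<longlongrightarrow> 0) (at_right 0)"
      unfolding xlnx_def by real_asymp
    ultimately show ?thesis
      using True by (simp add: continuous_within xlnx_def)
  next
    case False
    with \<open>y \<in> {0..}\<close> have "isCont xlnx y"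
      unfolding xlnx_def by (intro continuous_intros) auto
    then show ?thesis
      by (rule continuous_at_imp_continuous_within)
  qed
qed

lemma xlnx_clamp_bcontfun: "(\<lambda>y. xlnx (clamp 0 R y)) \<in> bcontfun"
proof -
  have cont: "continuous_on (cbox 0 R) xlnx"
    by (rule continuous_on_subset[OF continuous_on_xlnx]) auto
  have "bounded (xlnx ` cbox 0 R)"
    by (rule compact_imp_bounded[OF compact_continuous_image[OF cont compact_cbox]])
  then have "bounded (range (\<lambda>y. xlnx (clamp 0 R y)))"
    by (rule clamp_bounded)
  moreover have "continuous_on UNIV (\<lambda>y. xlnx (clamp 0 R y))"
    by (rule clamp_continuous_on[OF cont])
  ultimately show ?thesis
    by (simp add: bcontfun_def)
qed

lemma xlnx_clamp_diff_le:
  assumes "S \<ge> 1" "y \<ge> 0"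
  shows "\<bar>xlnx y - xlnx (clamp 0 (S\<^sup>2) y)\<bar> \<le> 2 * y\<^sup>2 / S"
proof (cases "y \<le> S\<^sup>2")
  case True
  then show ?thesis
    using assms by (simp add: clamp_real)
next
  case False
  have "S\<^sup>2 \<ge> 1" "S > 0"
    using assms(1) by (simp_all add: one_le_power)
  with False have "y > 0" "clamp 0 (S\<^sup>2) y = S\<^sup>2"
    by (simp_all add: clamp_real)
  text \<open>Since \<open>S \<le> y / S\<close>, we get \<open>ln y = ln (y / S) + ln S \<le> 2 y / S\<close>.\<close>
  have "ln y \<le> 2 * y / S"
  proof -
    have "ln (y / S) \<le> y / S - 1" "ln S \<le> S - 1"
      using \<open>y > 0\<close> \<open>S > 0\<close> by (simp_all add: ln_le_minus_one)
    moreover have "S \<le> y / S"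
      using False \<open>S > 0\<close> by (simp add: le_divide_eq power2_eq_square)
    ultimately show ?thesis
      using \<open>y > 0\<close> \<open>S > 0\<close> by (simp add: ln_div)
  qed
  then have "y * ln y \<le> y * (2 * y / S)"
    using \<open>y > 0\<close> by (intro mult_left_mono) auto
  then have "xlnx y \<le> 2 * y\<^sup>2 / S"
    by (simp add: xlnx_def power2_eq_square mult_ac)
  moreover have "0 \<le> ln (S\<^sup>2)" "ln (S\<^sup>2) \<le> ln y"
    using False \<open>S\<^sup>2 \<ge> 1\<close> \<open>y > 0\<close> \<open>S > 0\<close> by (simp_all add: ln_le_cancel_iff)
  then have "0 \<le> xlnx (S\<^sup>2)" "xlnx (S\<^sup>2) \<le> xlnx y"
    using False \<open>S\<^sup>2 \<ge> 1\<close> unfolding xlnx_def by (auto intro!: mult_mono)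
  ultimately show ?thesis
    using \<open>clamp 0 (S\<^sup>2) y = S\<^sup>2\<close> by simp
qed

lemma integral_xlnx_clamp_diff_le:
  fixes f :: "'a \<Rightarrow> real"
  assumes "prob_space M" "f \<in> borel_measurable M" "\<And>x. 0 \<le> f x" "integrable M (\<lambda>x. (f x)\<^sup>2)" "S \<ge> 1"
  shows "\<bar>(\<integral>x. xlnx (f x) \<partial>M) - (\<integral>x. xlnx (clamp 0 (S\<^sup>2) (f x)) \<partial>M)\<bar>
    \<le> 2 * (\<integral>x. (f x)\<^sup>2 \<partial>M) / S"
proof -
  interpret prob_space M by fact
  have xlnx_meas: "xlnx \<in> borel_measurable borel"
    unfolding xlnx_def[abs_def] by measurable
  have clamped_meas: "(\<lambda>y. xlnx (clamp 0 (S\<^sup>2) y)) \<in> borel_measurable borel"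
    using bcontfun_borel_measurable[OF xlnx_clamp_bcontfun] by simp
  have int: "integrable M (\<lambda>x. xlnx (f x))"
  proof (rule Bochner_Integration.integrable_bound)
    show "integrable M (\<lambda>x. 1 + (f x)\<^sup>2)"
      using assms(4) by simp
    show "AE x in M. norm (xlnx (f x)) \<le> norm (1 + (f x)\<^sup>2)"
      using abs_xlnx_le[OF assms(3)] by (intro AE_I2) simp
  qed (use assms(2) xlnx_meas in measurable)
  obtain B where "\<And>y. \<bar>xlnx (clamp 0 (S\<^sup>2) y)\<bar> \<le> B"
    using xlnx_clamp_bcontfun unfolding bcontfun_def bounded_real by blast
  then have int_clamped: "integrable M (\<lambda>x. xlnx (clamp 0 (S\<^sup>2) (f x)))"
    using assms(2) clamped_meas by (intro integrable_const_bound[where B=B]) auto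
  have "\<bar>(\<integral>x. xlnx (f x) \<partial>M) - (\<integral>x. xlnx (clamp 0 (S\<^sup>2) (f x)) \<partial>M)\<bar>
      = \<bar>\<integral>x. xlnx (f x) - xlnx (clamp 0 (S\<^sup>2) (f x)) \<partial>M\<bar>"
    using int int_clamped by simp
  also have "\<dots> \<le> (\<integral>x. \<bar>xlnx (f x) - xlnx (clamp 0 (S\<^sup>2) (f x))\<bar> \<partial>M)"
    by (rule integral_abs_bound)
  also have "\<dots> \<le> (\<integral>x. 2 * (f x)\<^sup>2 / S \<partial>M)"
    using int int_clamped assms(4) xlnx_clamp_diff_le[OF assms(5,3)]
    by (intro integral_mono) auto
  also have "\<dots> = 2 * (\<integral>x. (f x)\<^sup>2 \<partial>M) / S"
    by simp
  finally show ?thesis .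
qed

lemma tendsto_integral_xlnx:
  fixes Ms :: "'i \<Rightarrow> 'a measure" and fs :: "'i \<Rightarrow> 'a \<Rightarrow> real"
    and M :: "'a measure" and f :: "'a \<Rightarrow> real"
  assumes Ms: "\<forall>\<^sub>F i in F. prob_space (Ms i) \<and> fs i \<in> borel_measurable (Ms i) \<and>
      integrable (Ms i) (\<lambda>x. (fs i x)\<^sup>2) \<and> (\<integral>x. (fs i x)\<^sup>2 \<partial>Ms i) \<le> c"
    and M: "prob_space M" "f \<in> borel_measurable M" "integrable M (\<lambda>x. (f x)\<^sup>2)" "(\<integral>x. (f x)\<^sup>2 \<partial>M) \<le> c"
    and nonneg: "\<And>i x. 0 \<le> fs i x" "\<And>x. 0 \<le> f x"
    and weak: "weak_conv_filter (\<lambda>i. distr (Ms i) borel (fs i)) (distr M borel f) F"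
  shows "((\<lambda>i. \<integral>x. xlnx (fs i x) \<partial>Ms i) \<longlongrightarrow> (\<integral>x. xlnx (f x) \<partial>M)) F"
proof (rule tendsto_by_approximation)
  fix e :: real
  assume "e > 0"
  define S where "S = max 1 (2 * c / e)"
  have "S \<ge> 1" "2 * c / S \<le> e"
    using \<open>e > 0\<close> by (auto simp: S_def field_simps max_def)
  define \<psi> where "\<psi> y = xlnx (clamp 0 (S\<^sup>2) y)" for y
  have \<psi>_meas: "\<psi> \<in> borel_measurable borel"
    unfolding \<psi>_def[abs_def] using bcontfun_borel_measurable[OF xlnx_clamp_bcontfun] by simp
  have tail: "\<bar>(\<integral>x. xlnx (u x) \<partial>N) - (\<integral>x. \<psi> (u x) \<partial>N)\<bar> \<le> e"
    if "prob_space N" "u \<in> borel_measurable N" "\<And>x. 0 \<le> u x" "integrable N (\<lambda>x. (u x)\<^sup>2)"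
      "(\<integral>x. (u x)\<^sup>2 \<partial>N) \<le> c" for N :: "'a measure" and u
  proof -
    have "2 * (\<integral>x. (u x)\<^sup>2 \<partial>N) / S \<le> 2 * c / S"
      using that(5) \<open>S \<ge> 1\<close> by (simp add: divide_right_mono)
    then show ?thesis
      using integral_xlnx_clamp_diff_le[OF that(1-4) \<open>S \<ge> 1\<close>] \<open>2 * c / S \<le> e\<close>
      unfolding \<psi>_def by linarith
  qed
  have integral_\<psi>: "(\<integral>x. \<psi> x \<partial>distr N borel u) = (\<integral>x. \<psi> (u x) \<partial>N)"
    if "u \<in> borel_measurable N" for N :: "'a measure" and u
    using integral_distr[OF that \<psi>_meas] .
  show "\<exists>a a0. (a \<longlongrightarrow> a0) F \<and> (\<forall>\<^sub>F i in F. \<bar>(\<integral>x. xlnx (fs i x) \<partial>Ms i) - a i\<bar> \<le> e) \<and>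
      \<bar>(\<integral>x. xlnx (f x) \<partial>M) - a0\<bar> \<le> e"
  proof (intro exI conjI)
    have "((\<lambda>i. \<integral>x. \<psi> x \<partial>distr (Ms i) borel (fs i)) \<longlongrightarrow> (\<integral>x. \<psi> x \<partial>distr M borel f)) F"
      using weak_conv_filterD[OF weak xlnx_clamp_bcontfun] unfolding \<psi>_def .
    moreover have "\<forall>\<^sub>F i in F. (\<integral>x. \<psi> x \<partial>distr (Ms i) borel (fs i)) = (\<integral>x. \<psi> (fs i x) \<partial>Ms i)"
      using Ms by eventually_elim (simp add: integral_\<psi>)
    ultimately show "((\<lambda>i. \<integral>x. \<psi> (fs i x) \<partial>Ms i) \<longlongrightarrow> (\<integral>x. \<psi> (f x) \<partial>M)) F"
      unfolding integral_\<psi>[OF M(2)] by (rule Lim_transform_eventually)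
    show "\<forall>\<^sub>F i in F. \<bar>(\<integral>x. xlnx (fs i x) \<partial>Ms i) - (\<integral>x. \<psi> (fs i x) \<partial>Ms i)\<bar> \<le> e"
      using Ms by eventually_elim (rule tail; simp add: nonneg)
    show "\<bar>(\<integral>x. xlnx (f x) \<partial>M) - (\<integral>x. \<psi> (f x) \<partial>M)\<bar> \<le> e"
      by (rule tail[OF M(1,2) nonneg(2) M(3,4)])
  qed
qed

definition likelihood_ratio :: "'a measure \<Rightarrow> 'a measure \<Rightarrow> 'a \<Rightarrow> real" where
  "likelihood_ratio M N x = enn2real (RN_deriv M N x)"

lemma mult_le_add_square_div:
  fixes a g t :: real
  assumes "0 \<le> g" "g \<le> 1" "t > 0"
  shows "a * g \<le> t * g + a\<^sup>2 / (4 * t)"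
proof -
  have "0 \<le> (2 * t * g - a)\<^sup>2"
    by simp
  also have "(2 * t * g - a)\<^sup>2 = 4 * t * t * (g * g) - 4 * t * (a * g) + a\<^sup>2"
    by (simp add: power2_eq_square algebra_simps)
  finally have "4 * t * (a * g) \<le> 4 * t * t * (g * g) + a\<^sup>2"
    by linarith
  moreover have "4 * t * t * (g * g) \<le> 4 * t * t * g"
    using assms by (intro mult_left_mono) (auto simp: mult_left_le)
  ultimately have "4 * t * (a * g) \<le> 4 * t * (t * g) + a\<^sup>2"
    by (simp add: algebra_simps)
  then have "(4 * t * (a * g)) / (4 * t) \<le> (4 * t * (t * g) + a\<^sup>2) / (4 * t)"
    using assms(3) by (intro divide_right_mono) auto
  then show ?thesis
    using assms(3) by (simp add: add_divide_distrib)
qed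

locale abs_cont_prob_pair = M: prob_space M + N: prob_space N
  for M N :: "'a::topological_space measure" +
  assumes sets_M: "sets M = sets borel" and sets_N: "sets N = sets borel"
    and abs_cont: "absolutely_continuous M N"
begin

abbreviation lr :: "'a \<Rightarrow> real" where
  "lr \<equiv> likelihood_ratio M N"

lemma sets_N_eq_sets_M: "sets N = sets M"
  using sets_M sets_N by simp

lemma borel_measurable_lr: "lr \<in> borel_measurable borel"
proof -
  have "RN_deriv M N \<in> borel_measurable borel"
    using borel_measurable_RN_deriv[of M N] unfolding measurable_cong_sets[OF sets_M refl] .
  then show ?thesis
    unfolding likelihood_ratio_def[abs_def] by measurable
qed

lemma lr_measurable_M: "lr \<in> borel_measurable M"
  by (rule borel_measurable_if_sets_eq_borel[OF sets_M borel_measurable_lr])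

lemma integral_N:
  assumes "f \<in> borel_measurable borel"
  shows "(\<integral>x. f x \<partial>N) = (\<integral>x. lr x * f x \<partial>M)"
  using M.RN_deriv_integral[OF N.sigma_finite_measure_axioms abs_cont sets_N_eq_sets_M
      borel_measurable_if_sets_eq_borel[OF sets_M assms]]
  by (simp add: likelihood_ratio_def)

lemma integrable_N_iff:
  assumes "f \<in> borel_measurable borel"
  shows "integrable N f \<longleftrightarrow> integrable M (\<lambda>x. lr x * f x)"
  using M.RN_deriv_integrable[OF N.sigma_finite_measure_axioms abs_cont sets_N_eq_sets_M
      borel_measurable_if_sets_eq_borel[OF sets_M assms]]
  by (simp add: likelihood_ratio_def)

lemma nn_integral_RN_deriv_square:
  "(\<integral>\<^sup>+x. (RN_deriv M N x)\<^sup>2 \<partial>M) = (\<integral>\<^sup>+x. ennreal ((lr x)\<^sup>2) \<partial>M)"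
proof (rule nn_integral_cong_AE)
  show "AE x in M. (RN_deriv M N x)\<^sup>2 = ennreal ((lr x)\<^sup>2)"
    using M.RN_deriv_finite[OF N.sigma_finite_measure_axioms abs_cont sets_N_eq_sets_M]
    by eventually_elim (simp add: likelihood_ratio_def ennreal_power[symmetric] less_top)
qed

lemma integrable_lr_square:
  assumes "(\<integral>\<^sup>+x. (RN_deriv M N x)\<^sup>2 \<partial>M) < \<infinity>"
  shows "integrable M (\<lambda>x. (lr x)\<^sup>2)"
  using assms lr_measurable_M by (simp add: nn_integral_RN_deriv_square integrable_iff_bounded)

lemma nn_integral_RN_deriv_square_eq:
  assumes "integrable M (\<lambda>x. (lr x)\<^sup>2)"
  shows "(\<integral>\<^sup>+x. (RN_deriv M N x)\<^sup>2 \<partial>M) = ennreal (\<integral>x. (lr x)\<^sup>2 \<partial>M)"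
  using nn_integral_eq_integral[OF assms] by (simp add: nn_integral_RN_deriv_square)

lemma lr_square_bound:
  assumes "(\<integral>\<^sup>+x. (RN_deriv M N x)\<^sup>2 \<partial>M) \<le> ennreal c" "0 \<le> c"
  shows "integrable M (\<lambda>x. (lr x)\<^sup>2)" "(\<integral>x. (lr x)\<^sup>2 \<partial>M) \<le> c"
proof -
  show int: "integrable M (\<lambda>x. (lr x)\<^sup>2)"
    using assms(1) by (intro integrable_lr_square) (simp add: le_less_trans)
  show "(\<integral>x. (lr x)\<^sup>2 \<partial>M) \<le> c"
    using assms unfolding nn_integral_RN_deriv_square_eq[OF int] by (simp add: ennreal_le_iff)
qed

lemma integral_square_diff_lr:
  assumes "integrable M (\<lambda>x. (lr x)\<^sup>2)" "g \<in> borel_measurable borel" "bounded (range g)"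
  shows "(\<integral>x. (lr x - g x)\<^sup>2 \<partial>M) = (\<integral>x. (lr x)\<^sup>2 \<partial>M) - 2 * (\<integral>x. g x \<partial>N) + (\<integral>x. (g x)\<^sup>2 \<partial>M)"
proof -
  obtain B where B: "\<And>x. \<bar>g x\<bar> \<le> B"
    using assms(3) by (auto simp: bounded_real)
  have "integrable N g"
    using assms(2) B by (intro N.integrable_const_bound[where B=B] borel_measurable_if_sets_eq_borel[OF sets_N]) auto
  then have lr_g: "integrable M (\<lambda>x. lr x * g x)"
    using integrable_N_iff[OF assms(2)] by simp
  have g2: "integrable M (\<lambda>x. (g x)\<^sup>2)"
    using B by (intro integrable_square_if_bounded[OF M.finite_measure_axioms] borel_measurable_if_sets_eq_borel[OF sets_M assms(2)])
  have "(lr x - g x)\<^sup>2 = (lr x)\<^sup>2 - 2 * (lr x * g x) + (g x)\<^sup>2" for x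
    by (simp add: power2_diff algebra_simps)
  then have "(\<integral>x. (lr x - g x)\<^sup>2 \<partial>M) = (\<integral>x. (lr x)\<^sup>2 - 2 * (lr x * g x) + (g x)\<^sup>2 \<partial>M)"
    by simp
  also have "\<dots> = (\<integral>x. (lr x)\<^sup>2 \<partial>M) - 2 * (\<integral>x. lr x * g x \<partial>M) + (\<integral>x. (g x)\<^sup>2 \<partial>M)"
    using assms(1) lr_g g2 by simp
  also have "(\<integral>x. lr x * g x \<partial>M) = (\<integral>x. g x \<partial>N)"
    using integral_N[OF assms(2)] by simp
  finally show ?thesis .
qed

lemma integral_N_le:
  assumes "integrable M (\<lambda>x. (lr x)\<^sup>2)" "g \<in> borel_measurable borel" "\<And>x. g x \<in> {0..1}" "t > 0"
  shows "(\<integral>x. g x \<partial>N) \<le> t * (\<integral>x. g x \<partial>M) + (\<integral>x. (lr x)\<^sup>2 \<partial>M) / (4 * t)"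
proof -
  have g_int: "integrable P g" if "finite_measure P" "sets P = sets borel" for P
    using assms(2,3) by (intro finite_measure.integrable_const_bound[OF that(1), where B=1]
        borel_measurable_if_sets_eq_borel[OF that(2)]) auto
  have pointwise: "lr x * g x \<le> t * g x + (lr x)\<^sup>2 / (4 * t)" for x
    using mult_le_add_square_div[OF _ _ assms(4)] assms(3)[of x] by simp
  have "(\<integral>x. g x \<partial>N) = (\<integral>x. lr x * g x \<partial>M)"
    by (rule integral_N[OF assms(2)])
  also have "\<dots> \<le> (\<integral>x. t * g x + (lr x)\<^sup>2 / (4 * t) \<partial>M)"
    using g_int[OF N.finite_measure_axioms sets_N] assms(1) g_int[OF M.finite_measure_axioms sets_M]
      integrable_N_iff[OF assms(2)] pointwise
    by (intro integral_mono) auto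
  also have "\<dots> = t * (\<integral>x. g x \<partial>M) + (\<integral>x. (lr x)\<^sup>2 \<partial>M) / (4 * t)"
    using assms(1) g_int[OF M.finite_measure_axioms sets_M] by simp
  finally show ?thesis .
qed

lemma KL_eq_integral_xlnx: "KL N M = (\<integral>x. xlnx (lr x) \<partial>M)"
proof -
  have "KL N M = (\<integral>x. ln (lr x) \<partial>N)"
    unfolding KL_def KL_divergence_def entropy_density_def
    by (simp add: likelihood_ratio_def[abs_def] log_def o_def)
  also have "\<dots> = (\<integral>x. xlnx (lr x) \<partial>M)"
  proof -
    have "(\<lambda>x. ln (lr x)) \<in> borel_measurable borel"
      using borel_measurable_lr by measurable
    then show ?thesis
      by (simp add: integral_N xlnx_def)
  qed
  finally show ?thesis .
qed

end

section \<open>Limits of likelihood ratios\<close>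

locale likelihood_ratio_limit =
  fixes P0 P1 :: "real \<Rightarrow> 'a::polish_space measure"
    and p0 p1 :: "'a measure"
    and c :: real
  assumes P0_prob: "\<And>l. l > 0 \<Longrightarrow> prob_space (P0 l)"
    and P1_prob: "\<And>l. l > 0 \<Longrightarrow> prob_space (P1 l)"
    and P0_sets: "\<And>l. l > 0 \<Longrightarrow> sets (P0 l) = sets borel"
    and P1_sets: "\<And>l. l > 0 \<Longrightarrow> sets (P1 l) = sets borel"
    and ac: "\<And>l. l > 0 \<Longrightarrow> absolutely_continuous (P0 l) (P1 l)"
    and p0_prob: "prob_space p0" and p1_prob: "prob_space p1"
    and p0_sets: "sets p0 = sets borel" and p1_sets: "sets p1 = sets borel"
    and conv0: "weak_conv_filter P0 p0 at_top"
    and conv1: "weak_conv_filter P1 p1 at_top"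
    and c_pos: "c > 0"
    and bound: "\<And>l. l > 0 \<Longrightarrow> (\<integral>\<^sup>+ x. (RN_deriv (P0 l) (P1 l) x)\<^sup>2 \<partial>P0 l) \<le> ennreal c"
begin

abbreviation lr :: "real \<Rightarrow> 'a \<Rightarrow> real" where
  "lr l \<equiv> likelihood_ratio (P0 l) (P1 l)"

lemma abs_cont_prob_pair_at: "l > 0 \<Longrightarrow> abs_cont_prob_pair (P0 l) (P1 l)"
  by (intro abs_cont_prob_pair.intro abs_cont_prob_pair_axioms.intro P0_prob P1_prob P0_sets P1_sets ac)

lemma lr_square_bound_at:
  assumes "l > 0"
  shows "integrable (P0 l) (\<lambda>x. (lr l x)\<^sup>2)" "(\<integral>x. (lr l x)\<^sup>2 \<partial>P0 l) \<le> c"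
  using abs_cont_prob_pair.lr_square_bound[OF abs_cont_prob_pair_at[OF assms] bound[OF assms]] c_pos by simp_all

lemma integral_limit_le:
  assumes "g \<in> bcontfun" "\<And>x. g x \<in> {0..1}" "t > 0"
  shows "(\<integral>x. g x \<partial>p1) \<le> t * (\<integral>x. g x \<partial>p0) + c / (4 * t)"
proof (rule tendsto_le[OF trivial_limit_at_top_linorder])
  show "((\<lambda>l. t * (\<integral>x. g x \<partial>P0 l) + c / (4 * t)) \<longlongrightarrow> t * (\<integral>x. g x \<partial>p0) + c / (4 * t)) at_top"
    using weak_conv_filterD[OF conv0 assms(1)] by (intro tendsto_intros)
  show "((\<lambda>l. \<integral>x. g x \<partial>P1 l) \<longlongrightarrow> (\<integral>x. g x \<partial>p1)) at_top"
    by (rule weak_conv_filterD[OF conv1 assms(1)])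
  show "\<forall>\<^sub>F l in at_top. (\<integral>x. g x \<partial>P1 l) \<le> t * (\<integral>x. g x \<partial>P0 l) + c / (4 * t)"
    using eventually_gt_at_top[of 0]
  proof eventually_elim
    case (elim l)
    have "(\<integral>x. g x \<partial>P1 l) \<le> t * (\<integral>x. g x \<partial>P0 l) + (\<integral>x. (lr l x)\<^sup>2 \<partial>P0 l) / (4 * t)"
      using abs_cont_prob_pair.integral_N_le[OF abs_cont_prob_pair_at[OF elim] lr_square_bound_at(1)[OF elim]
          bcontfun_borel_measurable[OF assms(1)] assms(2,3)] by simp
    also have "(\<integral>x. (lr l x)\<^sup>2 \<partial>P0 l) / (4 * t) \<le> c / (4 * t)"
      using lr_square_bound_at(2)[OF elim] assms(3) by (simp add: divide_right_mono)
    finally show ?case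
      by simp
  qed
qed

lemma absolutely_continuous_limit: "absolutely_continuous p0 p1"
  unfolding absolutely_continuous_def
proof
  fix A
  assume "A \<in> null_sets p0"
  then have A: "A \<in> sets borel" "measure p0 A = 0"
    using p0_sets by (auto simp: null_sets_def measure_def)
  have fin: "finite_measure p0" "finite_measure p1"
    using p0_prob p1_prob by (simp_all add: prob_space_def)
  have le: "measure p1 A \<le> c / (4 * t)" if "t > 0" for t
    using measure_le_if_integral_bcontfun_le[OF fin(1) p0_sets fin(2) p1_sets
        integral_limit_le[OF _ _ that] _ A(1)] that A(2) by simp
  have "measure p1 A \<le> 0"
  proof (rule field_le_epsilon)
    fix e :: real
    assume "e > 0"
    then have "measure p1 A \<le> c / (4 * (c / (4 * e)))"
      using le[of "c / (4 * e)"] c_pos by simp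
    then show "measure p1 A \<le> 0 + e"
      using c_pos \<open>e > 0\<close> by simp
  qed
  then show "A \<in> null_sets p1"
    using A(1) p1_sets finite_measure.emeasure_eq_measure[OF fin(2)]
    by (simp add: null_sets_def measure_le_0_iff)
qed

end

locale likelihood_ratio_L2_limit = likelihood_ratio_limit +
  assumes lr_square_conv: "((\<lambda>l. \<integral>\<^sup>+ x. (RN_deriv (P0 l) (P1 l) x)\<^sup>2 \<partial>P0 l)
      \<longlongrightarrow> (\<integral>\<^sup>+ x. (RN_deriv p0 p1 x)\<^sup>2 \<partial>p0)) at_top"
begin

abbreviation lr0 :: "'a \<Rightarrow> real" where
  "lr0 \<equiv> likelihood_ratio p0 p1"

lemma abs_cont_prob_pair_limit: "abs_cont_prob_pair p0 p1"
  by (intro abs_cont_prob_pair.intro abs_cont_prob_pair_axioms.intro p0_prob p1_prob p0_sets p1_sets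
      absolutely_continuous_limit)

lemma lr_square_bound_limit: "integrable p0 (\<lambda>x. (lr0 x)\<^sup>2)" "(\<integral>x. (lr0 x)\<^sup>2 \<partial>p0) \<le> c"
proof -
  have "\<forall>\<^sub>F l in at_top. (\<integral>\<^sup>+ x. (RN_deriv (P0 l) (P1 l) x)\<^sup>2 \<partial>P0 l) \<le> ennreal c"
    using eventually_gt_at_top[of 0] by eventually_elim (rule bound)
  then have "(\<integral>\<^sup>+ x. (RN_deriv p0 p1 x)\<^sup>2 \<partial>p0) \<le> ennreal c"
    by (rule tendsto_le[OF trivial_limit_at_top_linorder tendsto_const lr_square_conv])
  then show "integrable p0 (\<lambda>x. (lr0 x)\<^sup>2)" "(\<integral>x. (lr0 x)\<^sup>2 \<partial>p0) \<le> c"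
    using abs_cont_prob_pair.lr_square_bound[OF abs_cont_prob_pair_limit] c_pos by simp_all
qed

lemma tendsto_integral_lr_square:
  "((\<lambda>l. \<integral>x. (lr l x)\<^sup>2 \<partial>P0 l) \<longlongrightarrow> (\<integral>x. (lr0 x)\<^sup>2 \<partial>p0)) at_top"
proof -
  have "\<forall>\<^sub>F l in at_top. (\<integral>\<^sup>+ x. (RN_deriv (P0 l) (P1 l) x)\<^sup>2 \<partial>P0 l) = ennreal (\<integral>x. (lr l x)\<^sup>2 \<partial>P0 l)"
    using eventually_gt_at_top[of 0] by eventually_elim
      (rule abs_cont_prob_pair.nn_integral_RN_deriv_square_eq[OF abs_cont_prob_pair_at lr_square_bound_at(1)])
  with lr_square_conv have "((\<lambda>l. ennreal (\<integral>x. (lr l x)\<^sup>2 \<partial>P0 l)) \<longlongrightarrow> ennreal (\<integral>x. (lr0 x)\<^sup>2 \<partial>p0)) at_top"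
    unfolding abs_cont_prob_pair.nn_integral_RN_deriv_square_eq[OF abs_cont_prob_pair_limit lr_square_bound_limit(1)]
    by (rule Lim_transform_eventually)
  then show ?thesis
    by (subst (asm) tendsto_ennreal_iff) (auto intro!: always_eventually)
qed

lemma tendsto_L2_dist:
  assumes "g \<in> bcontfun"
  shows "((\<lambda>l. \<integral>x. (lr l x - g x)\<^sup>2 \<partial>P0 l) \<longlongrightarrow> (\<integral>x. (lr0 x - g x)\<^sup>2 \<partial>p0)) at_top"
proof -
  have g: "g \<in> borel_measurable borel" "bounded (range g)"
    using assms bcontfun_borel_measurable[OF assms] by (auto simp: bcontfun_def)
  have g2: "(\<lambda>x. (g x)\<^sup>2) \<in> bcontfun"
    using bcontfun_power2[OF assms] .
  have "((\<lambda>l. (\<integral>x. (lr l x)\<^sup>2 \<partial>P0 l) - 2 * (\<integral>x. g x \<partial>P1 l) + (\<integral>x. (g x)\<^sup>2 \<partial>P0 l))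
      \<longlongrightarrow> (\<integral>x. (lr0 x)\<^sup>2 \<partial>p0) - 2 * (\<integral>x. g x \<partial>p1) + (\<integral>x. (g x)\<^sup>2 \<partial>p0)) at_top"
    by (intro tendsto_intros tendsto_integral_lr_square weak_conv_filterD[OF conv1 assms]
        weak_conv_filterD[OF conv0 g2])
  moreover have "\<forall>\<^sub>F l in at_top. (\<integral>x. (lr l x)\<^sup>2 \<partial>P0 l) - 2 * (\<integral>x. g x \<partial>P1 l) + (\<integral>x. (g x)\<^sup>2 \<partial>P0 l)
      = (\<integral>x. (lr l x - g x)\<^sup>2 \<partial>P0 l)"
    using eventually_gt_at_top[of 0] by eventually_elim
      (rule abs_cont_prob_pair.integral_square_diff_lr[OF abs_cont_prob_pair_at lr_square_bound_at(1) g, symmetric])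
  ultimately show ?thesis
    unfolding abs_cont_prob_pair.integral_square_diff_lr[OF abs_cont_prob_pair_limit lr_square_bound_limit(1) g]
    by (rule Lim_transform_eventually)
qed

lemma weak_conv_distr_lr:
  "weak_conv_filter (\<lambda>l. distr (P0 l) borel (lr l)) (distr p0 borel lr0) at_top"
proof (rule weak_conv_filter_distr_if_L2_conv[OF _ p0_prob p0_sets _ lr_square_bound_limit(1) conv0 tendsto_L2_dist])
  show "\<forall>\<^sub>F l in at_top. prob_space (P0 l) \<and> sets (P0 l) = sets borel \<and>
      lr l \<in> borel_measurable borel \<and> integrable (P0 l) (\<lambda>x. (lr l x)\<^sup>2)"
    using eventually_gt_at_top[of 0] by eventually_elim
      (simp add: P0_prob P0_sets lr_square_bound_at abs_cont_prob_pair.borel_measurable_lr[OF abs_cont_prob_pair_at])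
  show "lr0 \<in> borel_measurable borel"
    by (rule abs_cont_prob_pair.borel_measurable_lr[OF abs_cont_prob_pair_limit])
qed

lemma tendsto_KL: "((\<lambda>l. KL (P1 l) (P0 l)) \<longlongrightarrow> KL p1 p0) at_top"
proof -
  have "((\<lambda>l. \<integral>x. xlnx (lr l x) \<partial>P0 l) \<longlongrightarrow> (\<integral>x. xlnx (lr0 x) \<partial>p0)) at_top"
  proof (rule tendsto_integral_xlnx[OF _ p0_prob _ lr_square_bound_limit _ _ weak_conv_distr_lr])
    show "\<forall>\<^sub>F l in at_top. prob_space (P0 l) \<and> lr l \<in> borel_measurable (P0 l) \<and>
        integrable (P0 l) (\<lambda>x. (lr l x)\<^sup>2) \<and> (\<integral>x. (lr l x)\<^sup>2 \<partial>P0 l) \<le> c"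
      using eventually_gt_at_top[of 0] by eventually_elim
        (simp add: P0_prob lr_square_bound_at abs_cont_prob_pair.lr_measurable_M[OF abs_cont_prob_pair_at])
    show "lr0 \<in> borel_measurable p0"
      by (rule abs_cont_prob_pair.lr_measurable_M[OF abs_cont_prob_pair_limit])
  qed (simp_all add: likelihood_ratio_def)
  moreover have "\<forall>\<^sub>F l in at_top. (\<integral>x. xlnx (lr l x) \<partial>P0 l) = KL (P1 l) (P0 l)"
    using eventually_gt_at_top[of 0] by eventually_elim
      (rule abs_cont_prob_pair.KL_eq_integral_xlnx[OF abs_cont_prob_pair_at, symmetric])
  ultimately show ?thesis
    unfolding abs_cont_prob_pair.KL_eq_integral_xlnx[OF abs_cont_prob_pair_limit]
    by (rule Lim_transform_eventually)
qed

end

theorem proposition4: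
  fixes P0 P1 :: "real \<Rightarrow> 'a::polish_space measure"
    and p0 p1 :: "'a measure"
    and c :: real
  assumes P0_prob: "\<And>l. l > 0 \<Longrightarrow> prob_space (P0 l)"
    and P1_prob: "\<And>l. l > 0 \<Longrightarrow> prob_space (P1 l)"
    and P0_sets: "\<And>l. l > 0 \<Longrightarrow> sets (P0 l) = sets borel"
    and P1_sets: "\<And>l. l > 0 \<Longrightarrow> sets (P1 l) = sets borel"
    and ac: "\<And>l. l > 0 \<Longrightarrow> absolutely_continuous (P0 l) (P1 l)"
    and p0_prob: "prob_space p0" and p1_prob: "prob_space p1"
    and p0_sets: "sets p0 = sets borel" and p1_sets: "sets p1 = sets borel"
    and conv0: "weak_conv_filter P0 p0 at_top"
    and conv1: "weak_conv_filter P1 p1 at_top"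
    and c_pos: "c > 0"
    and bound: "\<And>l. l > 0 \<Longrightarrow> (\<integral>\<^sup>+ x. (RN_deriv (P0 l) (P1 l) x)\<^sup>2 \<partial>P0 l) \<le> ennreal c"
  shows "absolutely_continuous p0 p1 \<and>
    (((\<lambda>l. \<integral>\<^sup>+ x. (RN_deriv (P0 l) (P1 l) x)\<^sup>2 \<partial>P0 l)
        \<longlongrightarrow> (\<integral>\<^sup>+ x. (RN_deriv p0 p1 x)\<^sup>2 \<partial>p0)) at_top
     \<longrightarrow>
       weak_conv_filter (\<lambda>l. distr (P0 l) borel (\<lambda>x. enn2real (RN_deriv (P0 l) (P1 l) x)))
                        (distr p0 borel (\<lambda>x. enn2real (RN_deriv p0 p1 x))) at_top
     \<and> ((\<lambda>l. KL (P1 l) (P0 l)) \<longlongrightarrow> KL p1 p0) at_top)"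
proof -
  interpret likelihood_ratio_limit P0 P1 p0 p1 c
    by (rule likelihood_ratio_limit.intro) (fact assms)+
  show ?thesis
  proof (intro conjI impI)
    show "absolutely_continuous p0 p1"
      by (rule absolutely_continuous_limit)
  next
    assume "((\<lambda>l. \<integral>\<^sup>+ x. (RN_deriv (P0 l) (P1 l) x)\<^sup>2 \<partial>P0 l) \<longlongrightarrow> (\<integral>\<^sup>+ x. (RN_deriv p0 p1 x)\<^sup>2 \<partial>p0)) at_top"
    then interpret likelihood_ratio_L2_limit P0 P1 p0 p1 c
      by (intro likelihood_ratio_L2_limit.intro likelihood_ratio_limit_axioms
          likelihood_ratio_L2_limit_axioms.intro)
    show "weak_conv_filter (\<lambda>l. distr (P0 l) borel (\<lambda>x. enn2real (RN_deriv (P0 l) (P1 l) x)))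
        (distr p0 borel (\<lambda>x. enn2real (RN_deriv p0 p1 x))) at_top"
      using weak_conv_distr_lr unfolding likelihood_ratio_def[abs_def] .
    show "((\<lambda>l. KL (P1 l) (P0 l)) \<longlongrightarrow> KL p1 p0) at_top"
      by (rule tendsto_KL)
  qed
qed

end
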